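(* Let $f:(\mathbb{C}^3,0)\to(\mathbb{C}^3,0)$ be a simple corner $$f=(x+x^ay^bz^c\,x(\lambda+P),\; y+x^ay^bz^c\,y(\mu+Q),\; z+x^ay^bz^c\,R),$$ and write $R=\alpha x+\beta y+\gamma z+O(\mathfrak{m}^2)$, with $\alpha=\beta=0$ if $c>0$. Then the singular directions of $f$ are: - $[\lambda-\gamma:0:\alpha]$, if $\alpha$ and $\lambda-\gamma$ are not both zero; - $[p:0:r]$ for all $[p:r]\in\mathbb{P}^1$, if $\alpha=\lambda-\gamma=0$; - $[0:\mu-\gamma:\beta]$, if $\beta$ and $\mu-\gamma$ are not both zero; - $[0:q:r]$ for all $[q:r]\in\mathbb{P}^1$, if $\beta=\mu-\gamma=0$; - $[0:0:1]$. All these directions are exceptional, and at each of the corresponding points of the exceptional divisor of the blow-up of the origin, the lift of $f$ is a simple corner.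
   Context: In the form of $f$: $a,b\in\mathbb{N}^*$, $c\in\mathbb{N}$, $\lambda\in\mathbb{C}^*$, $\mu\in\mathbb{C}\setminus\lambda\mathbb{Q}_{>0}$, $P,Q,R\in\mathfrak{m}$ (the maximal ideal at $0$), and $z\mid R$ if $c>0$. A germ is called a simple corner if it has this form in some local coordinates. Singular directions are taken with respect to $\ell=x^ay^bz^c$: $v$ is singular if $H_\ell(v)=\lambda' v$ for some $\lambda'$, where $H_\ell$ is the homogeneous part of smallest degree of $\ell^{-1}(f-\mathrm{id})$. A direction is exceptional if it is tangent to the divisor $\{x^ay^bz^c=0\}$. *)

theory Defs
  imports "HOL-Analysis.Analysis"
begin

type_synonym c3 = "complex \<times> complex \<times> complex"

definition smul3 :: "complex \<Rightarrow> c3 \<Rightarrow> c3" where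
  "smul3 t v = (t * fst v, t * fst (snd v), t * snd (snd v))"

definition comp3 :: "nat \<Rightarrow> c3 \<Rightarrow> complex" where
  "comp3 i v = (if i = 1 then fst v else if i = 2 then fst (snd v) else snd (snd v))"

definition holo3 :: "c3 set \<Rightarrow> (c3 \<Rightarrow> complex) \<Rightarrow> bool" where
  "holo3 U g \<longleftrightarrow> open U \<and> (\<forall>p\<in>U. \<exists>D. (g has_derivative D) (at p) \<and>
      (\<forall>c w. D (smul3 c w) = c * D w))"

definition holo3map :: "c3 set \<Rightarrow> (c3 \<Rightarrow> c3) \<Rightarrow> bool" where
  "holo3map U h \<longleftrightarrow> holo3 U (\<lambda>p. fst (h p)) \<and> holo3 U (\<lambda>p. fst (snd (h p)))
      \<and> holo3 U (\<lambda>p. snd (snd (h p)))"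

definition simple_corner_form ::
  "(c3 \<Rightarrow> c3) \<Rightarrow> nat \<Rightarrow> nat \<Rightarrow> nat \<Rightarrow> complex \<Rightarrow> complex \<Rightarrow>
   (c3 \<Rightarrow> complex) \<Rightarrow> (c3 \<Rightarrow> complex) \<Rightarrow> (c3 \<Rightarrow> complex) \<Rightarrow> c3 set \<Rightarrow> bool" where
  "simple_corner_form f a b c lam mu P Q R U \<longleftrightarrow>
     open U \<and> 0 \<in> U \<and> a > 0 \<and> b > 0 \<and> lam \<noteq> 0 \<and>
     \<not> (\<exists>r::rat. r > 0 \<and> mu = lam * of_rat r) \<and>
     holo3 U P \<and> holo3 U Q \<and> holo3 U R \<and> P 0 = 0 \<and> Q 0 = 0 \<and> R 0 = 0 \<and>
     (c > 0 \<longrightarrow> (\<exists>R'. holo3 U R' \<and> (\<forall>p\<in>U. R p = snd (snd p) * R' p))) \<and>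
     (\<forall>x y z. (x, y, z) \<in> U \<longrightarrow>
        f (x, y, z) = (x + x^a * y^b * z^c * x * (lam + P (x, y, z)),
                       y + x^a * y^b * z^c * y * (mu + Q (x, y, z)),
                       z + x^a * y^b * z^c * R (x, y, z)))"

definition is_simple_corner0 :: "(c3 \<Rightarrow> c3) \<Rightarrow> c3 set \<Rightarrow> bool" where
  "is_simple_corner0 h U \<longleftrightarrow> (\<exists>a b c lam mu P Q R. simple_corner_form h a b c lam mu P Q R U)"

definition simple_corner_at :: "(c3 \<Rightarrow> c3) \<Rightarrow> c3 \<Rightarrow> bool" where
  "simple_corner_at g q \<longleftrightarrow> (\<exists>\<psi> V W U. open V \<and> open W \<and> 0 \<in> V \<and> \<psi> 0 = q \<and>
      bij_betw \<psi> V W \<and> holo3map V \<psi> \<and> holo3map W (inv_into V \<psi>) \<and>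
      U \<subseteq> V \<and> (\<forall>p\<in>U. g (\<psi> p) \<in> W) \<and>
      is_simple_corner0 (\<lambda>p. inv_into V \<psi> (g (\<psi> p))) U)"

text \<open>Homogeneous part of degree k of a holomorphic germ at 0, evaluated at v:
  the k-th Taylor coefficient of t \<mapsto> G(t v).\<close>
definition hom_part1 :: "nat \<Rightarrow> (c3 \<Rightarrow> complex) \<Rightarrow> c3 \<Rightarrow> complex" where
  "hom_part1 k g v = (deriv ^^ k) (\<lambda>t. g (smul3 t v)) 0 / fact k"

definition hom_part :: "nat \<Rightarrow> (c3 \<Rightarrow> c3) \<Rightarrow> c3 \<Rightarrow> c3" where
  "hom_part k G v = (hom_part1 k (\<lambda>p. fst (G p)) v, hom_part1 k (\<lambda>p. fst (snd (G p))) v,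
                     hom_part1 k (\<lambda>p. snd (snd (G p))) v)"

definition lowest_hom :: "(c3 \<Rightarrow> c3) \<Rightarrow> c3 \<Rightarrow> c3" where
  "lowest_hom G = hom_part (LEAST k. \<exists>v. hom_part k G v \<noteq> 0) G"

text \<open>Singular direction (represented by a nonzero vector) of f w.r.t. \<ell>:
  H_\<ell> is the lowest homogeneous part of the holomorphic germ G = \<ell>^{-1}(f - id).\<close>
definition sing_dir :: "(c3 \<Rightarrow> c3) \<Rightarrow> (c3 \<Rightarrow> complex) \<Rightarrow> c3 \<Rightarrow> bool" where
  "sing_dir f l v \<longleftrightarrow> v \<noteq> 0 \<and> (\<exists>G U. open U \<and> 0 \<in> U \<and> holo3map U G \<and>
      (\<forall>p\<in>U. f p - p = smul3 (l p) (G p)) \<and> (\<exists>l'. lowest_hom G v = smul3 l' v))"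

definition proj_eq :: "c3 \<Rightarrow> c3 \<Rightarrow> bool" where
  "proj_eq v w \<longleftrightarrow> (\<exists>t. t \<noteq> 0 \<and> v = smul3 t w)"

text \<open>Tangent to the divisor {x^a y^b z^c = 0}.\<close>
definition exceptional :: "nat \<Rightarrow> nat \<Rightarrow> nat \<Rightarrow> c3 \<Rightarrow> bool" where
  "exceptional a b c v \<longleftrightarrow> (a > 0 \<and> fst v = 0) \<or> (b > 0 \<and> fst (snd v) = 0)
      \<or> (c > 0 \<and> snd (snd v) = 0)"

definition blow_chart :: "nat \<Rightarrow> c3 \<Rightarrow> c3" where
  "blow_chart i p = (let (s, u, w) = p in
     if i = 1 then (s, s * u, s * w) else if i = 2 then (s * u, u, u * w)
     else (s * w, u * w, w))"

text \<open>Point of the exceptional divisor corresponding to direction v in chart i (v_i \<noteq> 0).\<close>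
definition chart_point :: "nat \<Rightarrow> c3 \<Rightarrow> c3" where
  "chart_point i v = (let (v1, v2, v3) = v in
     if i = 1 then (0, v2 / v1, v3 / v1) else if i = 2 then (v1 / v2, 0, v3 / v2)
     else (v1 / v3, v2 / v3, 0))"

definition lift_simple_corner_at :: "(c3 \<Rightarrow> c3) \<Rightarrow> nat \<Rightarrow> c3 \<Rightarrow> bool" where
  "lift_simple_corner_at f i q \<longleftrightarrow> (\<exists>g U. open U \<and> q \<in> U \<and> holo3map U g \<and>
      (\<forall>p\<in>U. blow_chart i (g p) = f (blow_chart i p)) \<and> simple_corner_at g q)"

end

theory Submission
  imports Defs "HOL-Complex_Analysis.Cauchy_Integral_Formula"
begin

(* Writing f = id + x^a y^b z^c G, the germ G = (x (lam + P), y (mu + Q), R) is determined by f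
   off the coordinate planes, so H_l is the linear part (lam x, mu y, alpha x + beta y + gamma z)
   of G.  Since mu <> lam, its eigendirections are the listed ones, and each lies in a coordinate
   plane.  In the blow-up chart centred at such a direction, the pull-back of R is divisible by
   the exceptional coordinate (by a Cauchy integral), and the lift is again of the form
   "identity + monomial * diagonal terms".  At the centre its diagonal coefficients are
   (lam, mu - lam) in the first chart, (lam - mu, mu) in the second, and
   (lam - rho, mu - rho, rho) with rho = alpha s + beta u + gamma in the third; the nonresonance
   of (lam, mu) passes to a suitable pair of them, so after a translation and a permutation of
   the coordinates the lift is a simple corner.  The second chart reduces to the first by
   exchanging x and y. *)

subsection \<open>Holomorphic functions of three variables\<close>

definition has_holo3_derivative :: "(c3 \<Rightarrow> complex) \<Rightarrow> (c3 \<Rightarrow> complex) \<Rightarrow> c3 \<Rightarrow> bool" where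
  "has_holo3_derivative g D p \<longleftrightarrow> (g has_derivative D) (at p) \<and> (\<forall>c w. D (smul3 c w) = c * D w)"

lemma holo3_iff: "holo3 U g \<longleftrightarrow> open U \<and> (\<forall>p\<in>U. \<exists>D. has_holo3_derivative g D p)"
  unfolding holo3_def has_holo3_derivative_def by blast

lemma smul3_simps [simp]:
  "fst (smul3 c w) = c * fst w" "fst (snd (smul3 c w)) = c * fst (snd w)"
  "snd (snd (smul3 c w)) = c * snd (snd w)"
  by (auto simp: smul3_def)

lemma smul3_zero [simp]: "smul3 0 v = 0"
  by (simp add: smul3_def zero_prod_def)

lemma smul3_cancel: "k \<noteq> 0 \<Longrightarrow> smul3 k x = smul3 k y \<Longrightarrow> x = y"
  by (cases x; cases y) (auto simp: smul3_def)

lemma has_holo3_derivative_const: "has_holo3_derivative (\<lambda>p. k) (\<lambda>h. 0) p"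
  by (auto simp: has_holo3_derivative_def)

lemma has_holo3_derivative_fst: "has_holo3_derivative (\<lambda>p. fst p) (\<lambda>h. fst h) p"
  by (auto simp: has_holo3_derivative_def intro!: derivative_eq_intros)

lemma has_holo3_derivative_fst_snd: "has_holo3_derivative (\<lambda>p. fst (snd p)) (\<lambda>h. fst (snd h)) p"
  by (auto simp: has_holo3_derivative_def intro!: derivative_eq_intros)

lemma has_holo3_derivative_snd_snd: "has_holo3_derivative (\<lambda>p. snd (snd p)) (\<lambda>h. snd (snd h)) p"
  by (auto simp: has_holo3_derivative_def intro!: derivative_eq_intros)

lemma has_holo3_derivative_add:
  "has_holo3_derivative f Df p \<Longrightarrow> has_holo3_derivative g Dg p \<Longrightarrow>
   has_holo3_derivative (\<lambda>p. f p + g p) (\<lambda>h. Df h + Dg h) p"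
  by (auto simp: has_holo3_derivative_def algebra_simps intro!: derivative_eq_intros)

lemma has_holo3_derivative_diff:
  "has_holo3_derivative f Df p \<Longrightarrow> has_holo3_derivative g Dg p \<Longrightarrow>
   has_holo3_derivative (\<lambda>p. f p - g p) (\<lambda>h. Df h - Dg h) p"
  by (auto simp: has_holo3_derivative_def algebra_simps intro!: derivative_eq_intros)

lemma has_holo3_derivative_mult:
  assumes "has_holo3_derivative f Df p" "has_holo3_derivative g Dg p"
  shows "has_holo3_derivative (\<lambda>p. f p * g p) (\<lambda>h. f p * Dg h + Df h * g p) p"
  using assms unfolding has_holo3_derivative_def
  by (intro conjI has_derivative_mult) (auto simp: algebra_simps)

lemma has_holo3_derivative_inverse:
  assumes "has_holo3_derivative f Df p" "f p \<noteq> 0"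
  shows "has_holo3_derivative (\<lambda>p. inverse (f p)) (\<lambda>h. - (inverse (f p) * Df h * inverse (f p))) p"
  using assms unfolding has_holo3_derivative_def
  by (intro conjI Deriv.has_derivative_inverse) (auto simp: algebra_simps)

lemma has_holo3_derivative_compose:
  assumes "has_holo3_derivative f1 D1 p" "has_holo3_derivative f2 D2 p" "has_holo3_derivative f3 D3 p"
    and "has_holo3_derivative g Dg (f1 p, f2 p, f3 p)"
  shows "has_holo3_derivative (\<lambda>p. g (f1 p, f2 p, f3 p)) (\<lambda>h. Dg (D1 h, D2 h, D3 h)) p"
proof -
  have "((\<lambda>p. (f1 p, f2 p, f3 p)) has_derivative (\<lambda>h. (D1 h, D2 h, D3 h))) (at p)"
    using assms unfolding has_holo3_derivative_def by (auto intro!: has_derivative_Pair)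
  from has_derivative_compose[OF this] assms(4)
  have "((\<lambda>p. g (f1 p, f2 p, f3 p)) has_derivative (\<lambda>h. Dg (D1 h, D2 h, D3 h))) (at p)"
    unfolding has_holo3_derivative_def by blast
  moreover have "(D1 (smul3 c w), D2 (smul3 c w), D3 (smul3 c w)) = smul3 c (D1 w, D2 w, D3 w)" for c w
    using assms unfolding has_holo3_derivative_def by (simp add: smul3_def)
  ultimately show ?thesis
    using assms(4) unfolding has_holo3_derivative_def by simp
qed

lemma has_holo3_derivative_line:
  assumes "has_holo3_derivative g D (p + smul3 t v)"
  shows "((\<lambda>t. g (p + smul3 t v)) has_field_derivative D v) (at t)"
proof -
  have "((\<lambda>t. p + smul3 t v) has_derivative (\<lambda>h. smul3 h v)) (at t)"
    unfolding smul3_def by (auto intro!: derivative_eq_intros)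
  from has_derivative_compose[OF this] assms
  have "((\<lambda>t. g (p + smul3 t v)) has_derivative (\<lambda>h. D (smul3 h v))) (at t)"
    unfolding has_holo3_derivative_def by blast
  moreover have "(\<lambda>h. D (smul3 h v)) = (*) (D v)"
    using assms unfolding has_holo3_derivative_def fun_eq_iff by (metis mult.commute)
  ultimately show ?thesis unfolding has_field_derivative_def by simp
qed

lemma has_holo3_derivative_line0:
  "has_holo3_derivative g D 0 \<Longrightarrow> ((\<lambda>t. g (smul3 t v)) has_field_derivative D v) (at 0)"
  using has_holo3_derivative_line[of g D 0 0 v] by simp

lemma directional_deriv_eq:
  "has_holo3_derivative g D p \<Longrightarrow> deriv (\<lambda>\<zeta>. g (p + smul3 \<zeta> e)) 0 = D e"
  using has_holo3_derivative_line[of g D p 0 e] by (simp add: DERIV_imp_deriv)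

lemma has_holo3_derivative_linear_combination:
  assumes "has_holo3_derivative g D p"
  shows "D v = fst v * D (1,0,0) + fst (snd v) * D (0,1,0) + snd (snd v) * D (0,0,1)"
proof -
  have lin: "linear D" using assms unfolding has_holo3_derivative_def by (auto dest: has_derivative_linear)
  obtain x y z where v: "v = (x,y,z)" by (cases v)
  have "v = smul3 x (1,0,0) + smul3 y (0,1,0) + smul3 z (0,0,1)"
    by (simp add: v smul3_def)
  then have "D v = D (smul3 x (1,0,0)) + D (smul3 y (0,1,0)) + D (smul3 z (0,0,1))"
    by (metis lin linear_add)
  then show ?thesis using assms by (simp add: has_holo3_derivative_def v)
qed

lemma has_holo3_derivative_partials:
  assumes "has_holo3_derivative g D 0"
  shows "D v = deriv (\<lambda>t. g (t,0,0)) 0 * fst v + deriv (\<lambda>t. g (0,t,0)) 0 * fst (snd v)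
              + deriv (\<lambda>t. g (0,0,t)) 0 * snd (snd v)"
  using has_holo3_derivative_linear_combination[OF assms, of v]
    directional_deriv_eq[OF assms, of "(1,0,0)"] directional_deriv_eq[OF assms, of "(0,1,0)"]
    directional_deriv_eq[OF assms, of "(0,0,1)"]
  by (simp add: smul3_def mult.commute)

lemma holo3_open: "holo3 U g \<Longrightarrow> open U"
  by (simp add: holo3_def)

lemma holo3I: "open U \<Longrightarrow> (\<And>p. p \<in> U \<Longrightarrow> \<exists>D. has_holo3_derivative g D p) \<Longrightarrow> holo3 U g"
  by (auto simp: holo3_iff)

lemma holo3D: "holo3 U g \<Longrightarrow> p \<in> U \<Longrightarrow> \<exists>D. has_holo3_derivative g D p"
  by (auto simp: holo3_iff)

lemma holo3_const [simp]: "open U \<Longrightarrow> holo3 U (\<lambda>p. k)"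
  by (auto intro!: holo3I has_holo3_derivative_const)

lemma holo3_fst: "open U \<Longrightarrow> holo3 U (\<lambda>p. fst p)"
  by (auto intro!: holo3I has_holo3_derivative_fst)

lemma holo3_fst_snd: "open U \<Longrightarrow> holo3 U (\<lambda>p. fst (snd p))"
  by (auto intro!: holo3I has_holo3_derivative_fst_snd)

lemma holo3_snd_snd: "open U \<Longrightarrow> holo3 U (\<lambda>p. snd (snd p))"
  by (auto intro!: holo3I has_holo3_derivative_snd_snd)

lemma holo3_add: "holo3 U f \<Longrightarrow> holo3 U g \<Longrightarrow> holo3 U (\<lambda>p. f p + g p)"
  by (rule holo3I, simp add: holo3_open) (metis holo3D has_holo3_derivative_add)

lemma holo3_diff: "holo3 U f \<Longrightarrow> holo3 U g \<Longrightarrow> holo3 U (\<lambda>p. f p - g p)"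
  by (rule holo3I, simp add: holo3_open) (metis holo3D has_holo3_derivative_diff)

lemma holo3_mult: "holo3 U f \<Longrightarrow> holo3 U g \<Longrightarrow> holo3 U (\<lambda>p. f p * g p)"
  by (rule holo3I, simp add: holo3_open) (metis holo3D has_holo3_derivative_mult)

lemma holo3_inverse:
  "holo3 U f \<Longrightarrow> (\<And>p. p \<in> U \<Longrightarrow> f p \<noteq> 0) \<Longrightarrow> holo3 U (\<lambda>p. inverse (f p))"
  by (rule holo3I, simp add: holo3_open) (metis holo3D has_holo3_derivative_inverse)

lemma holo3_divide:
  "holo3 U f \<Longrightarrow> holo3 U g \<Longrightarrow> (\<And>p. p \<in> U \<Longrightarrow> g p \<noteq> 0) \<Longrightarrow> holo3 U (\<lambda>p. f p / g p)"
  using holo3_mult[OF _ holo3_inverse, of U f g] by (simp add: divide_inverse)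

lemma holo3_power: "holo3 U f \<Longrightarrow> holo3 U (\<lambda>p. f p ^ n)"
  by (induction n) (auto simp: holo3_open intro!: holo3_mult)

lemma holo3_compose:
  assumes "holo3 V f1" "holo3 V f2" "holo3 V f3" "holo3 W g"
    and "\<And>p. p \<in> V \<Longrightarrow> (f1 p, f2 p, f3 p) \<in> W"
  shows "holo3 V (\<lambda>p. g (f1 p, f2 p, f3 p))"
proof (rule holo3I)
  show "open V" using assms(1) by (simp add: holo3_open)
  fix p assume p: "p \<in> V"
  obtain D1 D2 D3 Dg where "has_holo3_derivative f1 D1 p" "has_holo3_derivative f2 D2 p"
    "has_holo3_derivative f3 D3 p" "has_holo3_derivative g Dg (f1 p, f2 p, f3 p)"
    using holo3D[OF assms(1) p] holo3D[OF assms(2) p] holo3D[OF assms(3) p]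
      holo3D[OF assms(4) assms(5)[OF p]]
    by blast
  from has_holo3_derivative_compose[OF this]
  show "\<exists>D. has_holo3_derivative (\<lambda>p. g (f1 p, f2 p, f3 p)) D p" by blast
qed

lemma holo3_subset: "holo3 U g \<Longrightarrow> open V \<Longrightarrow> V \<subseteq> U \<Longrightarrow> holo3 V g"
  by (auto simp: holo3_iff)

lemma holo3_cong: "holo3 U g \<Longrightarrow> (\<And>p. p \<in> U \<Longrightarrow> g p = g' p) \<Longrightarrow> holo3 U g'"
  unfolding holo3_iff has_holo3_derivative_def
  by (metis has_derivative_transform_within_open)

lemma holo3_continuous_on: "holo3 U g \<Longrightarrow> continuous_on U g"
  unfolding holo3_iff has_holo3_derivative_def
  by (metis at_within_open continuous_on_eq_continuous_within has_derivative_continuous)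

lemma open_holo3_nonzero: "holo3 V k \<Longrightarrow> open {p \<in> V. k p \<noteq> 0}"
proof -
  assume k: "holo3 V k"
  have "open (k -` (-{0}) \<inter> V)"
    using continuous_on_open_vimage[of V k] holo3_open[OF k] holo3_continuous_on[OF k] by blast
  then show ?thesis by (simp add: Int_def conj_commute)
qed

lemma holo3_holomorphic_on_line:
  assumes "holo3 \<Omega> H" and "\<And>\<zeta>. \<zeta> \<in> S \<Longrightarrow> p + smul3 \<zeta> e \<in> \<Omega>"
  shows "(\<lambda>\<zeta>. H (p + smul3 \<zeta> e)) holomorphic_on S"
  unfolding holomorphic_on_def field_differentiable_def
proof
  fix \<zeta> assume "\<zeta> \<in> S"
  then obtain D where "has_holo3_derivative H D (p + smul3 \<zeta> e)"
    using holo3D assms by blast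
  from has_holo3_derivative_line[OF this]
  show "\<exists>f'. ((\<lambda>\<zeta>. H (p + smul3 \<zeta> e)) has_field_derivative f') (at \<zeta> within S)"
    by (blast intro: has_field_derivative_at_within)
qed

lemma holo3map_continuous_on: "holo3map U G \<Longrightarrow> continuous_on U G"
proof -
  assume "holo3map U G"
  then have "continuous_on U (\<lambda>p. (fst (G p), fst (snd (G p)), snd (snd (G p))))"
    unfolding holo3map_def by (intro continuous_on_Pair holo3_continuous_on) auto
  then show ?thesis by simp
qed

lemma holo3_compose_map:
  assumes "holo3map V \<phi>" "holo3 W g" "\<And>p. p \<in> V \<Longrightarrow> \<phi> p \<in> W"
  shows "holo3 V (\<lambda>p. g (\<phi> p))"
  using holo3_compose[of V "\<lambda>p. fst (\<phi> p)" "\<lambda>p. fst (snd (\<phi> p))" "\<lambda>p. snd (snd (\<phi> p))" W g] assms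
  unfolding holo3map_def by simp

lemma holo3map_compose:
  assumes "holo3map W h" "holo3map V \<phi>" "\<And>p. p \<in> V \<Longrightarrow> \<phi> p \<in> W"
  shows "holo3map V (\<lambda>p. h (\<phi> p))"
  using assms holo3_compose_map[OF assms(2)] unfolding holo3map_def by blast

lemma holo3map_cong: "holo3map U h \<Longrightarrow> (\<And>p. p \<in> U \<Longrightarrow> h p = h' p) \<Longrightarrow> holo3map U h'"
  unfolding holo3map_def by (metis (no_types, lifting) holo3_cong)

lemma holo3map_subset: "holo3map U h \<Longrightarrow> open V \<Longrightarrow> V \<subseteq> U \<Longrightarrow> holo3map V h"
  unfolding holo3map_def using holo3_subset by blast

lemma holo3_vimage_compose:
  assumes "holo3map UNIV \<sigma>" "holo3 N g"
  shows "open (\<sigma> -` N)" "holo3 (\<sigma> -` N) (\<lambda>p. g (\<sigma> p))"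
proof -
  show o: "open (\<sigma> -` N)"
    using open_vimage[OF holo3_open[OF assms(2)] holo3map_continuous_on[OF assms(1)]] by simp
  show "holo3 (\<sigma> -` N) (\<lambda>p. g (\<sigma> p))"
    by (rule holo3_compose_map[OF holo3map_subset[OF assms(1) o] assms(2)]) auto
qed

subsection \<open>Dividing by a coordinate\<close>

lemma norm_c3_le: "norm ((a,b,c)::c3) \<le> cmod a + cmod b + cmod c"
  by (metis add.assoc add_left_mono norm_Pair_le order_trans)

lemma continuous_on_directional_deriv:
  assumes H: "holo3 \<Omega> H" and e: "\<And>c. norm (smul3 c e) = cmod c"
  shows "continuous_on \<Omega> (\<lambda>p. deriv (\<lambda>\<zeta>. H (p + smul3 \<zeta> e)) 0)"
proof -
  have oO: "open \<Omega>" using H holo3_open by blast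
  have Hc: "continuous_on \<Omega> H" using H holo3_continuous_on by blast
  show ?thesis unfolding continuous_on_eq_continuous_at[OF oO]
  proof
    fix p0 assume "p0 \<in> \<Omega>"
    then obtain \<delta> where d: "\<delta> > 0" "ball p0 \<delta> \<subseteq> \<Omega>" using oO openE by blast
    define \<rho> where "\<rho> = \<delta> / 2"
    have rho: "\<rho> > 0" using d by (simp add: \<rho>_def)
    let ?B = "ball p0 \<rho>"
    have inO: "p + smul3 \<zeta> e \<in> \<Omega>" if "p \<in> ?B" "cmod \<zeta> \<le> \<rho>" for p \<zeta>
    proof -
      have "dist p0 (p + smul3 \<zeta> e) \<le> dist p0 p + norm (smul3 \<zeta> e)"
        by (metis add_diff_cancel_left' dist_norm dist_triangle2 norm_minus_commute dist_commute)
      also have "\<dots> < \<delta>" using that e by (simp add: \<rho>_def)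
      finally show ?thesis using d by auto
    qed
    define K where "K = (\<lambda>p t. H (p + smul3 (circlepath 0 \<rho> t) e) / (circlepath 0 \<rho> t)^2 *
                         (2 * pi * \<i> * \<rho> * exp(2 * of_real pi * \<i> * t)))"
    \<comment> \<open>Cauchy's formula for the derivative turns the directional derivative into an integral
      depending continuously on the parameter.\<close>
    have eq: "deriv (\<lambda>\<zeta>. H (p + smul3 \<zeta> e)) 0 = 1 / (2 * of_real pi * \<i>) * integral (cbox 0 1) (K p)"
      if p: "p \<in> ?B" for p
    proof -
      let ?F = "\<lambda>\<zeta>. H (p + smul3 \<zeta> e)"
      have "?F holomorphic_on cball 0 \<rho>"
        by (rule holo3_holomorphic_on_line[OF H]) (use inO p in auto)
      then have "(?F has_field_derivative (1 / (2 * of_real pi * \<i>) *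
          contour_integral (circlepath 0 \<rho>) (\<lambda>u. ?F u / (u-0)^2))) (at 0)"
        using rho by (intro Cauchy_derivative_integral_circlepath(2))
          (auto intro: holomorphic_on_imp_continuous_on holomorphic_on_subset)
      then have "deriv ?F 0 = 1 / (2 * of_real pi * \<i>) *
          contour_integral (circlepath 0 \<rho>) (\<lambda>u. ?F u / (u-0)^2)"
        by (rule DERIV_imp_deriv)
      also have "contour_integral (circlepath 0 \<rho>) (\<lambda>u. ?F u / (u-0)^2) = integral (cbox 0 1) (K p)"
        unfolding contour_integral_integral vector_derivative_circlepath K_def cbox_interval by simp
      finally show ?thesis .
    qed
    have "continuous_on ?B (\<lambda>p. integral (cbox 0 1) (K p))"
    proof (rule integral_continuous_on_param)
      show "continuous_on (?B \<times> cbox 0 1) (\<lambda>(p, t). K p t)"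
        unfolding K_def split_beta
      proof (intro continuous_intros)
        show "continuous_on (?B \<times> cbox 0 1) (\<lambda>x. H (fst x + smul3 (circlepath 0 \<rho> (snd x)) e))"
        proof (rule continuous_on_compose2[OF Hc])
          show "continuous_on (?B \<times> cbox 0 1) (\<lambda>x. fst x + smul3 (circlepath 0 \<rho> (snd x)) e)"
            unfolding smul3_def circlepath by (intro continuous_intros)
          show "(\<lambda>x. fst x + smul3 (circlepath 0 \<rho> (snd x)) e) ` (?B \<times> cbox 0 1) \<subseteq> \<Omega>"
            using inO rho by (auto simp: circlepath norm_mult)
        qed
        show "continuous_on (?B \<times> cbox 0 1) (\<lambda>x. circlepath 0 \<rho> (snd x))"
          unfolding circlepath by (intro continuous_intros)
      qed (use rho in \<open>auto simp: circlepath\<close>)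
    qed
    then have "continuous_on ?B (\<lambda>p. 1 / (2 * of_real pi * \<i>) * integral (cbox 0 1) (K p))"
      by (intro continuous_intros)
    then have "continuous_on ?B (\<lambda>p. deriv (\<lambda>\<zeta>. H (p + smul3 \<zeta> e)) 0)"
      by (rule continuous_on_eq) (use eq in auto)
    then show "isCont (\<lambda>p. deriv (\<lambda>\<zeta>. H (p + smul3 \<zeta> e)) 0) p0"
      using continuous_on_eq_continuous_at[of ?B] rho by (meson centre_in_ball open_ball)
  qed
qed

definition blinfun3 :: "complex \<Rightarrow> complex \<Rightarrow> complex \<Rightarrow> c3 \<Rightarrow>\<^sub>L complex" where
  "blinfun3 a b c = (blinfun_mult_right a o\<^sub>L fst_blinfun)
     + (blinfun_mult_right b o\<^sub>L (fst_blinfun o\<^sub>L snd_blinfun))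
     + (blinfun_mult_right c o\<^sub>L (snd_blinfun o\<^sub>L snd_blinfun))"

lemma blinfun3_apply [simp]:
  "blinfun_apply (blinfun3 a b c) v = a * fst v + b * fst (snd v) + c * snd (snd v)"
  by (simp add: blinfun3_def blinfun.add_left)

lemma continuous_on_blinfun3 [continuous_intros]:
  "continuous_on S f \<Longrightarrow> continuous_on S g \<Longrightarrow> continuous_on S h \<Longrightarrow>
   continuous_on S (\<lambda>x. blinfun3 (f x) (g x) (h x))"
  unfolding blinfun3_def by (intro continuous_intros)

text \<open>With \<open>\<zeta> = circlepath 0 r t\<close>, \<open>cauchy_quotient H r x\<close> is
  \<open>(2\<pi>i)\<^sup>-\<^sup>1 \<ointegral> H(x\<^sub>1,x\<^sub>2,\<zeta>) / (\<zeta> (\<zeta> - x\<^sub>3)) d\<zeta>\<close>,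
  which by Cauchy's formula equals \<open>(H x - H(x\<^sub>1,x\<^sub>2,0)) / x\<^sub>3\<close>.\<close>
definition cauchy_quotient :: "(c3 \<Rightarrow> complex) \<Rightarrow> real \<Rightarrow> c3 \<Rightarrow> complex" where
  "cauchy_quotient H r x = integral (cbox 0 1)
     (\<lambda>t. H (fst x, fst (snd x), circlepath 0 r t) / (circlepath 0 r t - snd (snd x)))"

lemma circlepath_minus_nonzero:
  "cmod w < r \<Longrightarrow> circlepath 0 r t - w \<noteq> 0"
  by (auto simp: circlepath norm_mult)

lemma cauchy_quotient_eq:
  assumes H: "holo3 \<Omega> H" and rho: "\<rho> > 0"
    and inO: "\<And>s u \<zeta>. s \<in> ball s0 \<rho> \<Longrightarrow> u \<in> ball u0 \<rho> \<Longrightarrow> cmod \<zeta> \<le> 2*\<rho> \<Longrightarrow> (s,u,\<zeta>) \<in> \<Omega>"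
    and Z: "\<And>s u. (s,u,0) \<in> \<Omega> \<Longrightarrow> H (s,u,0) = 0"
    and x: "x \<in> ball s0 \<rho> \<times> ball u0 \<rho> \<times> ball 0 \<rho>"
  shows "H x = snd (snd x) * cauchy_quotient H (2*\<rho>) x"
proof -
  obtain s u w where xsuw: "x = (s,u,w)" and su: "s \<in> ball s0 \<rho>" "u \<in> ball u0 \<rho>" and w: "cmod w < \<rho>"
    using x by (cases x) auto
  define \<gamma> where "\<gamma> = circlepath 0 (2*\<rho>)"
  let ?F = "\<lambda>\<zeta>. H (s,u,\<zeta>)"
  have F0: "?F 0 = 0" using Z[of s u] inO[of s u 0] su rho by auto
  show ?thesis
  proof (cases "w = 0")
    case True then show ?thesis using F0 xsuw by simp
  next
    case False
    have "(\<lambda>\<zeta>. H ((s,u,0) + smul3 \<zeta> (0,0,1))) holomorphic_on cball 0 (2*\<rho>)"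
      by (rule holo3_holomorphic_on_line[OF H]) (use inO su in \<open>auto simp: smul3_def\<close>)
    then have hol: "?F holomorphic_on cball 0 (2*\<rho>)" by (simp add: smul3_def)
    have cauchy: "((\<lambda>t. ?F (\<gamma> t) / (\<gamma> t - v) * (2 * of_real pi * \<i> * \<gamma> t))
        has_integral (2 * of_real pi * \<i> * ?F v)) {0..1}" if v: "cmod v < 2*\<rho>" for v
    proof -
      have "((\<lambda>\<zeta>. ?F \<zeta> / (\<zeta> - v)) has_contour_integral (2 * of_real pi * \<i> * ?F v)) \<gamma>"
        unfolding \<gamma>_def
        by (rule Cauchy_integral_circlepath)
           (use hol v in \<open>auto intro: holomorphic_on_imp_continuous_on holomorphic_on_subset\<close>)
      then show ?thesis unfolding has_contour_integral_def
        by (rule has_integral_eq[rotated]) (simp add: \<gamma>_def vector_derivative_circlepath01, simp add: circlepath)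
    qed
    have "((\<lambda>t. 1 / (2 * of_real pi * \<i>) * (?F (\<gamma> t) / (\<gamma> t - w) * (2 * of_real pi * \<i> * \<gamma> t)
             - ?F (\<gamma> t) / (\<gamma> t - 0) * (2 * of_real pi * \<i> * \<gamma> t)))
        has_integral (1 / (2 * of_real pi * \<i>) * (2 * of_real pi * \<i> * ?F w - 2 * of_real pi * \<i> * ?F 0))) {0..1}"
      using w rho by (intro has_integral_mult_right has_integral_diff cauchy) auto
    then have "((\<lambda>t. w * (?F (\<gamma> t) / (\<gamma> t - w))) has_integral ?F w) {0..1}"
      using F0 circlepath_minus_nonzero[of w "2*\<rho>"] circlepath_minus_nonzero[of 0 "2*\<rho>"] w rho
      by (rule_tac has_integral_eq[rotated]) (auto simp: \<gamma>_def field_simps)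
    then have "w * integral {0..1} (\<lambda>t. ?F (\<gamma> t) / (\<gamma> t - w)) = ?F w"
      unfolding integral_mult_right[symmetric] by (rule integral_unique)
    then have "w * cauchy_quotient H (2*\<rho>) x = ?F w"
      by (simp add: cauchy_quotient_def \<gamma>_def xsuw cbox_interval)
    then show ?thesis by (simp add: xsuw)
  qed
qed

lemma has_holo3_derivative_divide_snd_snd:
  assumes DH: "has_holo3_derivative H DH (fst x, fst (snd x), \<zeta>)" and ne: "\<zeta> - snd (snd x) \<noteq> 0"
  shows "has_holo3_derivative (\<lambda>y. H (fst y, fst (snd y), \<zeta>) / (\<zeta> - snd (snd y)))
     (blinfun_apply (blinfun3 (DH (1,0,0) / (\<zeta> - snd (snd x))) (DH (0,1,0) / (\<zeta> - snd (snd x)))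
        (H (fst x, fst (snd x), \<zeta>) / (\<zeta> - snd (snd x))^2))) x"
proof -
  define d where "d = \<zeta> - snd (snd x)"
  have A: "has_holo3_derivative (\<lambda>y. H (fst y, fst (snd y), \<zeta>)) (\<lambda>h. DH (fst h, fst (snd h), 0)) x"
    using has_holo3_derivative_compose[OF has_holo3_derivative_fst has_holo3_derivative_fst_snd
        has_holo3_derivative_const DH] by simp
  have B: "has_holo3_derivative (\<lambda>y. inverse (\<zeta> - snd (snd y)))
      (\<lambda>h. - (inverse d * (0 - snd (snd h)) * inverse d)) x"
    using has_holo3_derivative_inverse[OF has_holo3_derivative_diff[OF has_holo3_derivative_const
        has_holo3_derivative_snd_snd]] ne unfolding d_def by blast
  have "(\<lambda>h. H (fst x, fst (snd x), \<zeta>) * (- (inverse d * (0 - snd (snd h)) * inverse d))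
        + DH (fst h, fst (snd h), 0) * inverse d)
      = blinfun_apply (blinfun3 (DH (1,0,0) / d) (DH (0,1,0) / d) (H (fst x, fst (snd x), \<zeta>) / d^2))"
  proof
    fix h :: c3
    have "DH (fst h, fst (snd h), 0) = fst h * DH (1,0,0) + fst (snd h) * DH (0,1,0)"
      using has_holo3_derivative_linear_combination[OF DH, of "(fst h, fst (snd h), 0)"] by simp
    then show "H (fst x, fst (snd x), \<zeta>) * (- (inverse d * (0 - snd (snd h)) * inverse d))
        + DH (fst h, fst (snd h), 0) * inverse d
      = blinfun_apply (blinfun3 (DH (1,0,0) / d) (DH (0,1,0) / d) (H (fst x, fst (snd x), \<zeta>) / d^2)) h"
      by (simp add: divide_inverse power2_eq_square algebra_simps)
  qed
  with has_holo3_derivative_mult[OF A B] show ?thesis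
    by (simp add: divide_inverse d_def)
qed

lemma holo3_parametric_integral:
  fixes f :: "c3 \<Rightarrow> real \<Rightarrow> complex"
  assumes oV: "open V" and cV: "convex V"
    and deriv: "\<And>x t. x \<in> V \<Longrightarrow> has_holo3_derivative (\<lambda>x. f x t) (blinfun_apply (fx x t)) x"
    and fx_cont: "continuous_on (V \<times> cbox 0 1) (\<lambda>(x, t). fx x t)"
    and f_cont: "\<And>x. x \<in> V \<Longrightarrow> continuous_on (cbox 0 1) (f x)"
  shows "holo3 V (\<lambda>x. integral (cbox 0 1) (f x))"
proof (rule holo3I[OF oV])
  fix x0 assume x0V: "x0 \<in> V"
  have "((\<lambda>x. integral (cbox 0 1) (f x)) has_derivative blinfun_apply (integral (cbox 0 1) (fx x0)))
      (at x0 within V)"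
  proof (rule leibniz_rule[OF _ _ fx_cont x0V cV])
    show "((\<lambda>x. f x t) has_derivative blinfun_apply (fx x t)) (at x within V)" if "x \<in> V" for x t
      using deriv[OF that, of t] unfolding has_holo3_derivative_def
      by (blast intro: has_derivative_at_withinI)
    show "f x integrable_on cbox 0 1" if "x \<in> V" for x
      using f_cont[OF that] by (rule integrable_continuous)
  qed
  then have "((\<lambda>x. integral (cbox 0 1) (f x)) has_derivative blinfun_apply (integral (cbox 0 1) (fx x0))) (at x0)"
    using at_within_open[OF x0V oV] by simp
  moreover have fxi: "fx x0 integrable_on cbox 0 1"
    by (rule integrable_continuous, rule continuous_on_compose2[OF fx_cont, where f="\<lambda>t. (x0, t)", simplified])
      (use x0V in \<open>auto intro!: continuous_intros\<close>)
  have "blinfun_apply (fx x0 t) (smul3 c w) = c * blinfun_apply (fx x0 t) w" for t c w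
    using deriv[OF x0V, of t] unfolding has_holo3_derivative_def by blast
  then have "blinfun_apply (integral (cbox 0 1) (fx x0)) (smul3 c w)
      = c * blinfun_apply (integral (cbox 0 1) (fx x0)) w" for c w
    unfolding blinfun_apply_integral[OF fxi] by simp
  ultimately show "\<exists>D. has_holo3_derivative (\<lambda>x. integral (cbox 0 1) (f x)) D x0"
    unfolding has_holo3_derivative_def by blast
qed

lemma holo3_cauchy_quotient:
  assumes H: "holo3 \<Omega> H" and rho: "\<rho> > 0"
    and inO: "\<And>s u \<zeta>. s \<in> ball s0 \<rho> \<Longrightarrow> u \<in> ball u0 \<rho> \<Longrightarrow> cmod \<zeta> \<le> 2*\<rho> \<Longrightarrow> (s,u,\<zeta>) \<in> \<Omega>"
  shows "holo3 (ball s0 \<rho> \<times> ball u0 \<rho> \<times> ball 0 \<rho>) (cauchy_quotient H (2*\<rho>))"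
proof -
  define V where "V = ball s0 \<rho> \<times> ball u0 \<rho> \<times> ball (0::complex) \<rho>"
  have oV: "open V" unfolding V_def by (intro open_Times open_ball)
  have Hc: "continuous_on \<Omega> H" using H holo3_continuous_on by blast
  define \<gamma> where "\<gamma> = circlepath 0 (2*\<rho>)"
  have \<gamma>_cont: "continuous_on S (\<lambda>x. \<gamma> (snd x))" for S :: "(c3 \<times> real) set"
    unfolding \<gamma>_def circlepath by (intro continuous_intros)
  have wV: "cmod (snd (snd x)) < \<rho>" if "x \<in> V" for x using that unfolding V_def by (auto simp: dist_norm)
  have \<gamma>_ne: "\<gamma> t - snd (snd x) \<noteq> 0" if "x \<in> V" for x t
    using circlepath_minus_nonzero wV[OF that] rho unfolding \<gamma>_def by (smt (verit))
  define f where "f = (\<lambda>(x::c3) t. H (fst x, fst (snd x), \<gamma> t) / (\<gamma> t - snd (snd x)))"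
  define q where "q x t = (fst x, fst (snd x), \<gamma> t)" for x :: c3 and t :: real
  have qO: "q x t \<in> \<Omega>" if "x \<in> V" for x t
    using that inO rho unfolding V_def q_def \<gamma>_def by (auto simp: circlepath norm_mult)
  define pd where "pd e q = deriv (\<lambda>\<zeta>. H (q + smul3 \<zeta> e)) 0" for e q
  have pd_cont: "continuous_on \<Omega> (pd (1,0,0))" "continuous_on \<Omega> (pd (0,1,0))"
    unfolding pd_def by (rule continuous_on_directional_deriv[OF H], simp add: smul3_def norm_Pair)+
  define fx where "fx x t = blinfun3 (pd (1,0,0) (q x t) / (\<gamma> t - snd (snd x)))
      (pd (0,1,0) (q x t) / (\<gamma> t - snd (snd x))) (H (q x t) / (\<gamma> t - snd (snd x))^2)" for x t
  have has_deriv_f: "has_holo3_derivative (\<lambda>x. f x t) (blinfun_apply (fx x t)) x" if xV: "x \<in> V" for x t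
  proof -
    obtain DH where DH: "has_holo3_derivative H DH (q x t)" using holo3D[OF H qO[OF xV]] by blast
    have "pd (1,0,0) (q x t) = DH (1,0,0)" "pd (0,1,0) (q x t) = DH (0,1,0)"
      unfolding pd_def using directional_deriv_eq[OF DH] by auto
    then show ?thesis
      using has_holo3_derivative_divide_snd_snd[OF DH[unfolded q_def] \<gamma>_ne[OF xV]]
      by (simp add: f_def fx_def q_def)
  qed
  have q_cont: "continuous_on (V \<times> cbox 0 1) (\<lambda>(x, t). q x t)"
    unfolding q_def \<gamma>_def circlepath split_beta by (intro continuous_intros)
  have fx_cont: "continuous_on (V \<times> cbox 0 1) (\<lambda>(x, t). fx x t)"
    unfolding fx_def split_beta
  proof (intro continuous_intros)
    show "continuous_on (V \<times> cbox 0 1) (\<lambda>x. pd (1,0,0) (q (fst x) (snd x)))"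
      by (rule continuous_on_compose2[OF pd_cont(1) q_cont[unfolded split_beta]]) (use qO in auto)
    show "continuous_on (V \<times> cbox 0 1) (\<lambda>x. pd (0,1,0) (q (fst x) (snd x)))"
      by (rule continuous_on_compose2[OF pd_cont(2) q_cont[unfolded split_beta]]) (use qO in auto)
    show "continuous_on (V \<times> cbox 0 1) (\<lambda>x. H (q (fst x) (snd x)))"
      by (rule continuous_on_compose2[OF Hc q_cont[unfolded split_beta]]) (use qO in auto)
  qed (use \<gamma>_ne \<gamma>_cont in auto)
  have f_cont: "continuous_on (cbox 0 1) (f x)" if "x \<in> V" for x
  proof -
    have "continuous_on (cbox 0 1) (\<lambda>t. H (q x t) / (\<gamma> t - snd (snd x)))"
    proof (intro continuous_intros)
      show "continuous_on (cbox 0 1) (\<lambda>t. H (q x t))"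
        by (rule continuous_on_compose2[OF Hc])
          (use qO[OF that] in \<open>auto simp: q_def \<gamma>_def circlepath intro!: continuous_intros\<close>)
      show "continuous_on (cbox 0 1) \<gamma>" unfolding \<gamma>_def circlepath by (intro continuous_intros)
    qed (use \<gamma>_ne that in auto)
    then show ?thesis by (simp add: f_def q_def)
  qed
  have k_eq: "cauchy_quotient H (2*\<rho>) = (\<lambda>x. integral (cbox 0 1) (f x))"
    by (simp add: fun_eq_iff cauchy_quotient_def f_def \<gamma>_def)
  have "holo3 V (cauchy_quotient H (2*\<rho>))"
    unfolding k_eq using has_deriv_f fx_cont f_cont oV
    by (intro holo3_parametric_integral) (auto simp: V_def intro!: convex_Times convex_ball)
  then show ?thesis by (simp add: V_def)
qed

lemma holo3_divisible_snd_snd: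
  assumes H: "holo3 \<Omega> H" and z0: "(s0,u0,0) \<in> \<Omega>"
    and Z: "\<And>s u. (s,u,0) \<in> \<Omega> \<Longrightarrow> H (s,u,0) = 0"
  shows "\<exists>V k. open V \<and> (s0,u0,0) \<in> V \<and> V \<subseteq> \<Omega> \<and> holo3 V k \<and> (\<forall>p\<in>V. H p = snd (snd p) * k p)"
proof -
  obtain \<delta> where d: "\<delta> > 0" "ball (s0,u0,0) \<delta> \<subseteq> \<Omega>"
    using holo3_open[OF H] z0 openE by blast
  define \<rho> where "\<rho> = \<delta> / 5"
  have rho: "\<rho> > 0" using d by (simp add: \<rho>_def)
  have inO: "(s,u,\<zeta>) \<in> \<Omega>" if "s \<in> ball s0 \<rho>" "u \<in> ball u0 \<rho>" "cmod \<zeta> \<le> 2*\<rho>" for s u \<zeta>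
  proof -
    have "dist (s0,u0,0) (s,u,\<zeta>) = norm ((s0 - s, u0 - u, - \<zeta>)::c3)"
      by (simp add: dist_norm)
    also have "\<dots> \<le> cmod (s0 - s) + cmod (u0 - u) + cmod (-\<zeta>)" by (rule norm_c3_le)
    also have "\<dots> < \<delta>" using that d(1) by (simp add: dist_norm \<rho>_def)
    finally show ?thesis using d by auto
  qed
  define V where "V = ball s0 \<rho> \<times> ball u0 \<rho> \<times> ball (0::complex) \<rho>"
  show ?thesis
  proof (intro exI conjI ballI)
    show "open V" unfolding V_def by (intro open_Times open_ball)
    show "(s0,u0,0) \<in> V" unfolding V_def using rho by auto
    show "V \<subseteq> \<Omega>" using inO rho by (force simp: V_def)
    show "holo3 V (cauchy_quotient H (2*\<rho>))"
      unfolding V_def by (rule holo3_cauchy_quotient[OF H rho inO])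
    show "H p = snd (snd p) * cauchy_quotient H (2*\<rho>) p" if "p \<in> V" for p
      using cauchy_quotient_eq[OF H rho inO Z] that unfolding V_def by blast
  qed
qed

definition swap12 :: "c3 \<Rightarrow> c3" where "swap12 p = (fst (snd p), fst p, snd (snd p))"
definition swap13 :: "c3 \<Rightarrow> c3" where "swap13 p = (snd (snd p), fst (snd p), fst p)"
definition swap23 :: "c3 \<Rightarrow> c3" where "swap23 p = (fst p, snd (snd p), fst (snd p))"

lemma swap_apply [simp]:
  "swap12 (x,y,z) = (y,x,z)" "swap13 (x,y,z) = (z,y,x)" "swap23 (x,y,z) = (x,z,y)"
  by (simp_all add: swap12_def swap13_def swap23_def)

lemma swap_swap [simp]:
  "swap12 (swap12 p) = p" "swap13 (swap13 p) = p" "swap23 (swap23 p) = p"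
  by (simp_all add: swap12_def swap13_def swap23_def)

lemma holo3map_swap: "holo3map UNIV swap12" "holo3map UNIV swap13" "holo3map UNIV swap23"
  unfolding holo3map_def swap12_def swap13_def swap23_def
  by (auto intro!: holo3_fst holo3_fst_snd holo3_snd_snd)

lemma holo3_divisible_fst:
  assumes H: "holo3 \<Omega> H" and z0: "(0,u0,w0) \<in> \<Omega>"
    and Z: "\<And>u w. (0,u,w) \<in> \<Omega> \<Longrightarrow> H (0,u,w) = 0"
  shows "\<exists>V k. open V \<and> (0,u0,w0) \<in> V \<and> V \<subseteq> \<Omega> \<and> holo3 V k \<and> (\<forall>p\<in>V. H p = fst p * k p)"
proof -
  note H' = holo3_vimage_compose[OF holo3map_swap(2) H]
  obtain V' k' where V': "open V'" "(w0,u0,0) \<in> V'" "V' \<subseteq> swap13 -` \<Omega>" "holo3 V' k'"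
    "\<forall>p\<in>V'. H (swap13 p) = snd (snd p) * k' p"
    using holo3_divisible_snd_snd[OF H'(2), of w0 u0] z0 Z by auto
  note k = holo3_vimage_compose[OF holo3map_swap(2) V'(4)]
  show ?thesis
  proof (intro exI conjI ballI)
    show "open (swap13 -` V')" "holo3 (swap13 -` V') (\<lambda>p. k' (swap13 p))" using k .
    show "(0,u0,w0) \<in> swap13 -` V'" using V'(2) by simp
    show "swap13 -` V' \<subseteq> \<Omega>" using V'(3) by (force dest: subsetD)
    show "H p = fst p * k' (swap13 p)" if "p \<in> swap13 -` V'" for p
      using V'(5) that by (metis swap_swap(2) swap13_def snd_conv vimageE)
  qed
qed

subsection \<open>Nonresonance and the eigendirections of the linear part\<close>

definition nonresonant :: "complex \<Rightarrow> complex \<Rightarrow> bool" where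
  "nonresonant lam mu \<longleftrightarrow> lam \<noteq> 0 \<and> \<not> (\<exists>r::rat. r > 0 \<and> mu = lam * of_rat r)"

lemma nonresonant_imp_neq: "nonresonant lam mu \<Longrightarrow> mu \<noteq> lam"
  unfolding nonresonant_def by (metis mult.right_neutral of_rat_1 zero_less_one)

lemma nonresonant_scale: "W \<noteq> 0 \<Longrightarrow> nonresonant (W * lam) (W * mu) \<longleftrightarrow> nonresonant lam mu"
  unfolding nonresonant_def by (auto simp: mult.assoc)

lemma nonresonant_diff_right: "nonresonant lam mu \<Longrightarrow> nonresonant lam (mu - lam)"
  unfolding nonresonant_def
proof safe
  fix r :: rat assume r: "r > 0" "mu - lam = lam * of_rat r" and "\<not> (\<exists>r>0. mu = lam * of_rat r)"
  moreover have "mu = lam * of_rat (1 + r)" using r by (simp add: of_rat_add algebra_simps)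
  ultimately show False by (metis add_pos_pos zero_less_one)
qed

lemma nonresonant_diff_left: "nonresonant lam mu \<Longrightarrow> nonresonant (lam - mu) mu"
  unfolding nonresonant_def
proof safe
  assume "lam - mu = 0" "lam \<noteq> 0" "\<not> (\<exists>r>0. mu = lam * of_rat r)"
  then show False using nonresonant_imp_neq[of lam mu] by (simp add: nonresonant_def)
next
  fix r :: rat assume r: "r > 0" "mu = (lam - mu) * of_rat r" and nr: "\<not> (\<exists>r>0. mu = lam * of_rat r)"
  have "mu * of_rat (1 + r) = lam * of_rat r" using r by (simp add: of_rat_add algebra_simps)
  then have "mu = lam * of_rat (r / (1 + r))"
    using r by (simp add: of_rat_divide nonzero_eq_divide_eq)
  moreover have "r / (1 + r) > 0" using r by simp
  ultimately show False using nr by blast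
qed

text \<open>At the origin of the third chart the lift has the eigenvalues \<open>lam - ga\<close>, \<open>mu - ga\<close>
  and \<open>ga\<close>.\<close>
lemma nonresonant_shift:
  assumes "nonresonant lam mu" "ga \<noteq> 0" "\<not> nonresonant ga (mu - ga)"
  shows "nonresonant ga (lam - ga)"
  unfolding nonresonant_def
proof safe
  fix r' :: rat assume r': "r' > 0" "lam - ga = ga * of_rat r'"
  obtain r :: rat where r: "r > 0" "mu - ga = ga * of_rat r"
    using assms(2,3) unfolding nonresonant_def by blast
  have "mu = ga * of_rat (1 + r)" "lam = ga * of_rat (1 + r')"
    using r r' by (simp_all add: of_rat_add algebra_simps)
  moreover have "of_rat (1 + r') \<noteq> (0::complex)" using r' by simp
  ultimately have "mu = lam * of_rat ((1 + r) / (1 + r'))"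
    by (simp add: of_rat_divide field_simps)
  moreover have "(1 + r) / (1 + r') > 0" using r r' by simp
  ultimately show False using assms(1) unfolding nonresonant_def by blast
qed (use assms(2) in simp)

definition corner_linear :: "complex \<Rightarrow> complex \<Rightarrow> complex \<Rightarrow> complex \<Rightarrow> complex \<Rightarrow> c3 \<Rightarrow> c3" where
  "corner_linear lam mu al be ga v =
     (lam * fst v, mu * fst (snd v), al * fst v + be * fst (snd v) + ga * snd (snd v))"

lemma corner_linear_eigen_fst:
  assumes "corner_linear lam mu al be ga (x,y,z) = smul3 l (x,y,z)" "x \<noteq> 0" "mu \<noteq> lam"
  shows "y = 0" "al * x + ga * z = lam * z"
proof -
  have "lam * x = l * x" "mu * y = l * y" "al * x + be * y + ga * z = l * z"
    using assms(1) by (auto simp: corner_linear_def smul3_def)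
  moreover from this have "l = lam" using assms(2) by simp
  ultimately show y: "y = 0" and "al * x + ga * z = lam * z" using assms(3) by auto
qed

lemma corner_linear_eigen_fst_snd:
  assumes "corner_linear lam mu al be ga (x,y,z) = smul3 l (x,y,z)" "y \<noteq> 0" "mu \<noteq> lam"
  shows "x = 0" "be * y + ga * z = mu * z"
proof -
  have "lam * x = l * x" "mu * y = l * y" "al * x + be * y + ga * z = l * z"
    using assms(1) by (auto simp: corner_linear_def smul3_def)
  moreover from this have "l = mu" using assms(2) by simp
  ultimately show x: "x = 0" and "be * y + ga * z = mu * z" using assms(3) by auto
qed

lemma corner_linear_eigen_iff:
  assumes "mu \<noteq> lam"
  shows "(\<exists>l. corner_linear lam mu al be ga (x,y,z) = smul3 l (x,y,z)) \<longleftrightarrow>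
     (y = 0 \<and> al * x = (lam - ga) * z) \<or> (x = 0 \<and> be * y = (mu - ga) * z) \<or> (x = 0 \<and> y = 0)"
proof
  assume "\<exists>l. corner_linear lam mu al be ga (x,y,z) = smul3 l (x,y,z)"
  then obtain l where l: "corner_linear lam mu al be ga (x,y,z) = smul3 l (x,y,z)" ..
  show "(y = 0 \<and> al * x = (lam - ga) * z) \<or> (x = 0 \<and> be * y = (mu - ga) * z) \<or> (x = 0 \<and> y = 0)"
    using corner_linear_eigen_fst[OF l _ assms] corner_linear_eigen_fst_snd[OF l _ assms]
    by (cases "x = 0"; cases "y = 0") (auto simp: algebra_simps)
next
  assume "(y = 0 \<and> al * x = (lam - ga) * z) \<or> (x = 0 \<and> be * y = (mu - ga) * z) \<or> (x = 0 \<and> y = 0)"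
  then show "\<exists>l. corner_linear lam mu al be ga (x,y,z) = smul3 l (x,y,z)"
  proof (elim disjE conjE)
    assume "y = 0" "al * x = (lam - ga) * z"
    then show ?thesis by (intro exI[of _ lam]) (simp add: corner_linear_def smul3_def algebra_simps)
  next
    assume "x = 0" "be * y = (mu - ga) * z"
    then show ?thesis by (intro exI[of _ mu]) (simp add: corner_linear_def smul3_def algebra_simps)
  next
    assume "x = 0" "y = 0"
    then show ?thesis by (intro exI[of _ ga]) (simp add: corner_linear_def smul3_def)
  qed
qed

lemma proj_eq_fst_line_iff:
  assumes "(x,y,z) \<noteq> 0"
  shows "(if r \<noteq> 0 \<or> p \<noteq> 0 then proj_eq (x,y,z) (p,0,r) else y = 0) \<longleftrightarrow> y = 0 \<and> r * x = p * z"
proof (cases "p = 0")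
  case True
  then show ?thesis using assms
    by (cases "r = 0") (auto simp: proj_eq_def smul3_def zero_prod_def intro!: exI[of _ "z / r"])
next
  case False
  then show ?thesis using assms
    by (auto simp: proj_eq_def smul3_def zero_prod_def field_simps intro!: exI[of _ "x / p"])
qed

lemma proj_eq_fst_snd_line_iff:
  assumes "(x,y,z) \<noteq> 0"
  shows "(if r \<noteq> 0 \<or> q \<noteq> 0 then proj_eq (x,y,z) (0,q,r) else x = 0) \<longleftrightarrow> x = 0 \<and> r * y = q * z"
proof (cases "q = 0")
  case True
  then show ?thesis using assms
    by (cases "r = 0") (auto simp: proj_eq_def smul3_def zero_prod_def intro!: exI[of _ "z / r"])
next
  case False
  then show ?thesis using assms
    by (auto simp: proj_eq_def smul3_def zero_prod_def field_simps intro!: exI[of _ "y / q"])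
qed

lemma proj_eq_snd_snd_axis_iff: "proj_eq (x,y,z) (0,0,1) \<longleftrightarrow> x = 0 \<and> y = 0 \<and> z \<noteq> 0"
  by (auto simp: proj_eq_def smul3_def)

subsection \<open>Homogeneous parts\<close>

lemma hom_part_0: "hom_part 0 G v = G 0"
  by (simp add: hom_part_def hom_part1_def zero_prod_def)

lemma hom_part_1:
  "hom_part (Suc 0) G v = (deriv (\<lambda>t. fst (G (smul3 t v))) 0, deriv (\<lambda>t. fst (snd (G (smul3 t v)))) 0,
     deriv (\<lambda>t. snd (snd (G (smul3 t v)))) 0)"
  by (simp add: hom_part_def hom_part1_def)

lemma hom_part_cong:
  assumes "open W" "0 \<in> W" "\<And>p. p \<in> W \<Longrightarrow> G p = G' p"
  shows "hom_part k G = hom_part k G'"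
proof
  fix v
  have "open ((\<lambda>t. smul3 t v) -` W)"
    by (rule open_vimage[OF assms(1)]) (auto simp: smul3_def intro!: continuous_intros)
  then have "eventually (\<lambda>t. t \<in> (\<lambda>t. smul3 t v) -` W) (nhds 0)"
    using assms(2) by (intro eventually_nhds_in_open) auto
  then have "eventually (\<lambda>t. G (smul3 t v) = G' (smul3 t v)) (nhds 0)"
    by eventually_elim (use assms(3) in auto)
  then have "eventually (\<lambda>t. g (G (smul3 t v)) = g (G' (smul3 t v))) (nhds 0)" for g :: "c3 \<Rightarrow> complex"
    by eventually_elim simp
  from higher_deriv_cong_ev[OF this[of fst] refl] higher_deriv_cong_ev[OF this[of "\<lambda>q. fst (snd q)"] refl]
    higher_deriv_cong_ev[OF this[of "\<lambda>q. snd (snd q)"] refl]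
  show "hom_part k G v = hom_part k G' v"
    unfolding hom_part_def hom_part1_def by simp
qed

lemma lowest_hom_cong:
  "open W \<Longrightarrow> 0 \<in> W \<Longrightarrow> (\<And>p. p \<in> W \<Longrightarrow> G p = G' p) \<Longrightarrow> lowest_hom G = lowest_hom G'"
  unfolding lowest_hom_def by (simp add: hom_part_cong[of W G G'])

lemma continuous_on_eq_off_coordinate_planes:
  fixes G G' :: "c3 \<Rightarrow> c3" and p :: c3
  assumes W: "open W" and G: "continuous_on W G" and G': "continuous_on W G'"
    and eq: "\<And>q. q \<in> W \<Longrightarrow> fst q \<noteq> 0 \<Longrightarrow> fst (snd q) \<noteq> 0 \<Longrightarrow> snd (snd q) \<noteq> 0 \<Longrightarrow> G q = G' q"
    and p: "p \<in> W"
  shows "G p = G' p"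
proof -
  define \<phi> where "\<phi> t = p + ((t, t, t)::c3)" for t :: complex
  have "continuous_on UNIV \<phi>" "\<phi> 0 = p"
    unfolding \<phi>_def by (auto intro!: continuous_intros simp: zero_prod_def)
  then have lim: "(\<phi> \<longlongrightarrow> p) (at 0)"
    by (metis continuous_on_def UNIV_I)
  have evW: "eventually (\<lambda>t. \<phi> t \<in> W) (at 0)"
    using lim W p by (rule topological_tendstoD)
  have ev: "eventually (\<lambda>t. x + t \<noteq> 0) (at (0::complex))" for x :: complex
  proof (cases "x = 0")
    case True then show ?thesis by (simp add: eventually_at_filter)
  next
    case False
    have "((\<lambda>t. x + t) \<longlongrightarrow> x + 0) (at (0::complex))" by (intro tendsto_intros)
    then show ?thesis using False tendsto_imp_eventually_ne by auto
  qed
  have E: "eventually (\<lambda>t. G (\<phi> t) = G' (\<phi> t)) (at 0)"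
    using evW ev[of "fst p"] ev[of "fst (snd p)"] ev[of "snd (snd p)"]
    by eventually_elim (auto simp: \<phi>_def intro!: eq)
  have L1: "((\<lambda>t. G (\<phi> t)) \<longlongrightarrow> G p) (at 0)"
    using G p W lim evW by (metis continuous_on_eq_continuous_at isCont_tendsto_compose)
  have L2: "((\<lambda>t. G' (\<phi> t)) \<longlongrightarrow> G' p) (at 0)"
    using G' p W lim evW by (metis continuous_on_eq_continuous_at isCont_tendsto_compose)
  show ?thesis using tendsto_unique[OF at_neq_bot Lim_transform_eventually[OF L1 E] L2] .
qed

subsection \<open>Corner forms\<close>

text \<open>Unlike simple corners, this class is invariant under exchanging \<open>x\<close> and \<open>y\<close> (\<open>mu\<close> may
  vanish); this reduces the second chart of the blow-up to the first.\<close>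
locale corner =
  fixes f :: "c3 \<Rightarrow> c3" and a b c :: nat and lam mu :: complex
    and P Q R :: "c3 \<Rightarrow> complex" and U :: "c3 set"
  assumes open_U: "open U" and zero_in_U: "0 \<in> U" and a_pos: "a > 0" and b_pos: "b > 0"
    and holo_P: "holo3 U P" and holo_Q: "holo3 U Q" and holo_R: "holo3 U R"
    and P0: "P 0 = 0" and Q0: "Q 0 = 0" and R0: "R 0 = 0"
    and R_divisible: "c > 0 \<Longrightarrow> \<exists>R'. holo3 U R' \<and> (\<forall>p\<in>U. R p = snd (snd p) * R' p)"
    and f_eq: "\<And>x y z. (x, y, z) \<in> U \<Longrightarrow>
      f (x, y, z) = (x + x^a * y^b * z^c * x * (lam + P (x, y, z)),
                     y + x^a * y^b * z^c * y * (mu + Q (x, y, z)),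
                     z + x^a * y^b * z^c * R (x, y, z))"

lemma simple_corner_form_iff:
  "simple_corner_form f a b c lam mu P Q R U \<longleftrightarrow> corner f a b c lam mu P Q R U \<and> nonresonant lam mu"
  unfolding simple_corner_form_def corner_def nonresonant_def by blast

context corner
begin

abbreviation "\<alpha> \<equiv> deriv (\<lambda>t. R (t, 0, 0)) 0"
abbreviation "\<beta> \<equiv> deriv (\<lambda>t. R (0, t, 0)) 0"
abbreviation "\<gamma> \<equiv> deriv (\<lambda>t. R (0, 0, t)) 0"
abbreviation "monomial \<equiv> \<lambda>(x, y, z). x ^ a * y ^ b * z ^ c"

definition quotient_germ :: "c3 \<Rightarrow> c3" where
  "quotient_germ p = (fst p * (lam + P p), fst (snd p) * (mu + Q p), R p)"

lemma holo3map_quotient_germ: "holo3map U quotient_germ"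
  using holo_P holo_Q holo_R open_U
  by (auto simp: holo3map_def quotient_germ_def intro!: holo3_mult holo3_add holo3_fst holo3_fst_snd)

lemma f_minus_id: "p \<in> U \<Longrightarrow> f p - p = smul3 (monomial p) (quotient_germ p)"
  using f_eq[of "fst p" "fst (snd p)" "snd (snd p)"]
  by (cases p) (auto simp: quotient_germ_def smul3_def algebra_simps)

lemma R_derivative_at_0:
  obtains DR where "has_holo3_derivative R DR 0"
    and "\<And>v. DR v = \<alpha> * fst v + \<beta> * fst (snd v) + \<gamma> * snd (snd v)"
  using holo3D[OF holo_R zero_in_U] has_holo3_derivative_partials by blast

lemma hom_part_1_quotient_germ: "hom_part (Suc 0) quotient_germ v = corner_linear lam mu \<alpha> \<beta> \<gamma> v"
proof -
  obtain DP DQ where DP: "has_holo3_derivative P DP 0" and DQ: "has_holo3_derivative Q DQ 0"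
    using holo3D[OF holo_P zero_in_U] holo3D[OF holo_Q zero_in_U] by blast
  obtain DR where DR: "has_holo3_derivative R DR 0"
    and DR_eq: "\<And>v. DR v = \<alpha> * fst v + \<beta> * fst (snd v) + \<gamma> * snd (snd v)"
    using R_derivative_at_0 by blast
  have "has_holo3_derivative (\<lambda>p. fst p * (lam + P p)) (\<lambda>h. 0 * (0 + DP h) + fst h * (lam + 0)) 0"
    using has_holo3_derivative_mult[OF has_holo3_derivative_fst has_holo3_derivative_add[OF
        has_holo3_derivative_const DP], of lam] P0 by simp
  from has_holo3_derivative_line0[OF this, of v]
  have "deriv (\<lambda>t. fst (quotient_germ (smul3 t v))) 0 = lam * fst v"
    by (simp add: quotient_germ_def DERIV_imp_deriv mult.commute)
  moreover have "has_holo3_derivative (\<lambda>p. fst (snd p) * (mu + Q p)) (\<lambda>h. 0 * (0 + DQ h) + fst (snd h) * (mu + 0)) 0"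
    using has_holo3_derivative_mult[OF has_holo3_derivative_fst_snd has_holo3_derivative_add[OF
        has_holo3_derivative_const DQ], of mu] Q0 by simp
  from has_holo3_derivative_line0[OF this, of v]
  have "deriv (\<lambda>t. fst (snd (quotient_germ (smul3 t v)))) 0 = mu * fst (snd v)"
    by (simp add: quotient_germ_def DERIV_imp_deriv mult.commute)
  moreover have "deriv (\<lambda>t. snd (snd (quotient_germ (smul3 t v)))) 0 = DR v"
    using has_holo3_derivative_line0[OF DR, of v] by (simp add: quotient_germ_def DERIV_imp_deriv)
  ultimately show ?thesis by (simp add: hom_part_1 corner_linear_def DR_eq)
qed

lemma lowest_hom_quotient_germ:
  assumes "lam \<noteq> 0"
  shows "lowest_hom quotient_germ = corner_linear lam mu \<alpha> \<beta> \<gamma>"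
proof -
  have "quotient_germ 0 = 0" using P0 Q0 R0 by (simp add: quotient_germ_def zero_prod_def)
  then have "(LEAST k. \<exists>v. hom_part k quotient_germ v \<noteq> 0) = Suc 0"
  proof (intro Least_equality)
    show "\<exists>v. hom_part (Suc 0) quotient_germ v \<noteq> 0"
      using assms by (auto simp: hom_part_1_quotient_germ corner_linear_def zero_prod_def intro!: exI[of _ "(1,0,0)"])
    show "Suc 0 \<le> k" if "\<exists>v. hom_part k quotient_germ v \<noteq> 0" "quotient_germ 0 = 0" for k
      using that by (cases k) (auto simp: hom_part_0)
  qed
  then show ?thesis
    by (simp add: lowest_hom_def hom_part_1_quotient_germ fun_eq_iff)
qed

text \<open>Any \<open>G\<close> with \<open>f - id = monomial \<cdot> G\<close> agrees with \<open>quotient_germ\<close> where the monomial does not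
  vanish, hence near \<open>0\<close> by continuity.\<close>
lemma lowest_hom_eq:
  assumes "lam \<noteq> 0" and G: "open W" "0 \<in> W" "holo3map W G"
    and fG: "\<forall>p\<in>W. f p - p = smul3 (monomial p) (G p)"
  shows "lowest_hom G = corner_linear lam mu \<alpha> \<beta> \<gamma>"
proof -
  have "G p = quotient_germ p" if "p \<in> U \<inter> W" for p
  proof (rule continuous_on_eq_off_coordinate_planes[OF _ _ _ _ that])
    show "continuous_on (U \<inter> W) G" "continuous_on (U \<inter> W) quotient_germ"
      using holo3map_continuous_on[OF G(3)] holo3map_continuous_on[OF holo3map_quotient_germ]
      by (auto intro: continuous_on_subset)
    fix q assume q: "q \<in> U \<inter> W" "fst q \<noteq> 0" "fst (snd q) \<noteq> 0" "snd (snd q) \<noteq> 0"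
    have "smul3 (monomial q) (G q) = f q - q" using fG q(1) by simp
    also have "\<dots> = smul3 (monomial q) (quotient_germ q)" using f_minus_id q(1) by simp
    finally show "G q = quotient_germ q"
      by (rule smul3_cancel[rotated]) (use q in \<open>auto simp: case_prod_beta\<close>)
  qed (use open_U G in auto)
  then have "lowest_hom G = lowest_hom quotient_germ"
    using open_U G zero_in_U by (intro lowest_hom_cong[of "U \<inter> W"]) auto
  with lowest_hom_quotient_germ[OF assms(1)] show ?thesis by simp
qed

lemma sing_dir_iff:
  assumes "lam \<noteq> 0"
  shows "sing_dir f monomial v \<longleftrightarrow> v \<noteq> 0 \<and> (\<exists>l. corner_linear lam mu \<alpha> \<beta> \<gamma> v = smul3 l v)"
proof
  assume "sing_dir f monomial v"
  then show "v \<noteq> 0 \<and> (\<exists>l. corner_linear lam mu \<alpha> \<beta> \<gamma> v = smul3 l v)"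
    unfolding sing_dir_def using lowest_hom_eq[OF assms] by metis
next
  assume "v \<noteq> 0 \<and> (\<exists>l. corner_linear lam mu \<alpha> \<beta> \<gamma> v = smul3 l v)"
  then show "sing_dir f monomial v"
    unfolding sing_dir_def using open_U zero_in_U holo3map_quotient_germ f_minus_id lowest_hom_quotient_germ[OF assms]
    by metis
qed

lemma exceptional_eigendirection:
  assumes "mu \<noteq> lam" "corner_linear lam mu \<alpha> \<beta> \<gamma> v = smul3 l v"
  shows "exceptional a b c v"
  using corner_linear_eigen_fst[of lam mu \<alpha> \<beta> \<gamma> "fst v" "fst (snd v)" "snd (snd v)" l] assms a_pos b_pos
  by (cases "fst v = 0") (auto simp: exceptional_def)

end

subsection \<open>Recognising simple corners\<close>

definition corner_map ::
  "nat \<Rightarrow> nat \<Rightarrow> nat \<Rightarrow> (c3 \<Rightarrow> complex) \<Rightarrow> (c3 \<Rightarrow> complex) \<Rightarrow> (c3 \<Rightarrow> complex) \<Rightarrow> c3 \<Rightarrow> c3" where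
  "corner_map e1 e2 e3 B1 B2 A3 p =
     (let m = fst p ^ e1 * fst (snd p) ^ e2 * snd (snd p) ^ e3
      in (fst p + m * (fst p * B1 p), fst (snd p) + m * (fst (snd p) * B2 p), snd (snd p) + m * A3 p))"

lemma corner_map_apply [simp]:
  "corner_map e1 e2 e3 B1 B2 A3 (s,u,w) =
     (s + s^e1 * u^e2 * w^e3 * (s * B1 (s,u,w)), u + s^e1 * u^e2 * w^e3 * (u * B2 (s,u,w)),
      w + s^e1 * u^e2 * w^e3 * A3 (s,u,w))"
  by (simp add: corner_map_def Let_def)

definition corner_shape ::
  "(c3 \<Rightarrow> c3) \<Rightarrow> c3 set \<Rightarrow> nat \<Rightarrow> nat \<Rightarrow> nat \<Rightarrow> (c3 \<Rightarrow> complex) \<Rightarrow> (c3 \<Rightarrow> complex) \<Rightarrow> (c3 \<Rightarrow> complex) \<Rightarrow> bool"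
  where
  "corner_shape g N e1 e2 e3 B1 B2 A3 \<longleftrightarrow> open N \<and> holo3 N B1 \<and> holo3 N B2 \<and> holo3 N A3 \<and>
     (\<forall>p\<in>N. g p = corner_map e1 e2 e3 B1 B2 A3 p)"

lemma holo3map_corner_map:
  "holo3 N B1 \<Longrightarrow> holo3 N B2 \<Longrightarrow> holo3 N A3 \<Longrightarrow> holo3map N (corner_map e1 e2 e3 B1 B2 A3)"
  unfolding holo3map_def corner_map_def Let_def fst_conv snd_conv
  by (intro conjI holo3_add holo3_mult holo3_power holo3_fst holo3_fst_snd holo3_snd_snd holo3_open)

lemma corner_shape_holo3map: "corner_shape g N e1 e2 e3 B1 B2 A3 \<Longrightarrow> holo3map N g"
  unfolding corner_shape_def using holo3map_corner_map holo3map_cong by metis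

lemma corner_shape_swap12:
  assumes "corner_shape g N e1 e2 e3 B1 B2 A3"
  shows "corner_shape (\<lambda>p. swap12 (g (swap12 p))) (swap12 -` N) e2 e1 e3
           (\<lambda>p. B2 (swap12 p)) (\<lambda>p. B1 (swap12 p)) (\<lambda>p. A3 (swap12 p))"
  using assms holo3_vimage_compose[OF holo3map_swap(1)]
  by (auto simp: corner_shape_def swap12_def ac_simps)

lemma corner_shape_swap13:
  assumes "corner_shape g N e1 e2 e3 B1 B2 (\<lambda>p. snd (snd p) * B3 p)" "holo3 N B3"
  shows "corner_shape (\<lambda>p. swap13 (g (swap13 p))) (swap13 -` N) e3 e2 e1
           (\<lambda>p. B3 (swap13 p)) (\<lambda>p. B2 (swap13 p)) (\<lambda>p. snd (snd p) * B1 (swap13 p))"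
  using assms holo3_vimage_compose[OF holo3map_swap(2) assms(2)] holo3_vimage_compose[OF holo3map_swap(2)]
  by (auto simp: corner_shape_def swap13_def ac_simps intro!: holo3_mult holo3_snd_snd)

lemma corner_shape_swap23:
  assumes "corner_shape g N e1 e2 e3 B1 B2 (\<lambda>p. snd (snd p) * B3 p)" "holo3 N B3"
  shows "corner_shape (\<lambda>p. swap23 (g (swap23 p))) (swap23 -` N) e1 e3 e2
           (\<lambda>p. B1 (swap23 p)) (\<lambda>p. B3 (swap23 p)) (\<lambda>p. snd (snd p) * B2 (swap23 p))"
  using assms holo3_vimage_compose[OF holo3map_swap(3) assms(2)] holo3_vimage_compose[OF holo3map_swap(3)]
  by (auto simp: corner_shape_def swap23_def ac_simps intro!: holo3_mult holo3_snd_snd)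

lemma is_simple_corner0_cong:
  "is_simple_corner0 h U \<Longrightarrow> (\<And>p. p \<in> U \<Longrightarrow> h p = h' p) \<Longrightarrow> is_simple_corner0 h' U"
  unfolding is_simple_corner0_def simple_corner_form_def by metis

lemma simple_corner_at_conj:
  assumes sc: "simple_corner_at (\<lambda>p. \<sigma> (g (\<sigma> p))) q"
    and inv: "\<And>p. \<sigma> (\<sigma> p) = p" and holo: "holo3map UNIV \<sigma>"
  shows "simple_corner_at g (\<sigma> q)"
proof -
  obtain \<psi> V W U where oV: "open V" and oW: "open W" and V0: "0 \<in> V" and psi0: "\<psi> 0 = q"
    and bij: "bij_betw \<psi> V W" and hpsi: "holo3map V \<psi>" and hinv: "holo3map W (inv_into V \<psi>)"
    and UV: "U \<subseteq> V" and gW: "\<forall>p\<in>U. \<sigma> (g (\<sigma> (\<psi> p))) \<in> W"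
    and s0: "is_simple_corner0 (\<lambda>p. inv_into V \<psi> (\<sigma> (g (\<sigma> (\<psi> p))))) U"
    using sc unfolding simple_corner_at_def by blast
  define W' where "W' = \<sigma> -` W"
  have oW': "open W'" unfolding W'_def
    by (rule open_vimage[OF oW holo3map_continuous_on[OF holo]])
  have "bij_betw \<sigma> W W'"
    unfolding W'_def by (rule bij_betw_byWitness[where f' = \<sigma>]) (auto simp: inv)
  then have bij': "bij_betw (\<lambda>p. \<sigma> (\<psi> p)) V W'"
    using bij_betw_trans[OF bij] by (simp add: comp_def)
  have inv_eq: "inv_into V (\<lambda>p. \<sigma> (\<psi> p)) y = inv_into V \<psi> (\<sigma> y)" if "y \<in> W'" for y
  proof -
    have "\<sigma> y \<in> \<psi> ` V" using that bij by (simp add: W'_def bij_betw_def)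
    then have "inv_into V \<psi> (\<sigma> y) \<in> V" "\<psi> (inv_into V \<psi> (\<sigma> y)) = \<sigma> y"
      by (auto intro: inv_into_into f_inv_into_f)
    then show ?thesis
      by (intro inv_into_f_eq) (use bij' inv in \<open>auto simp: bij_betw_def\<close>)
  qed
  show ?thesis unfolding simple_corner_at_def
  proof (intro exI conjI)
    show "open V" "open W'" "0 \<in> V" "\<sigma> (\<psi> 0) = \<sigma> q" "bij_betw (\<lambda>p. \<sigma> (\<psi> p)) V W'" "U \<subseteq> V"
      using oV oW' V0 psi0 bij' UV by auto
    show "holo3map V (\<lambda>p. \<sigma> (\<psi> p))" by (rule holo3map_compose[OF holo hpsi]) auto
    show "holo3map W' (inv_into V (\<lambda>p. \<sigma> (\<psi> p)))"
      by (rule holo3map_cong[OF holo3map_compose[OF hinv holo3map_subset[OF holo oW']]])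
        (auto simp: W'_def inv_eq)
    show "\<forall>p\<in>U. g (\<sigma> (\<psi> p)) \<in> W'" using gW by (simp add: W'_def)
    show "is_simple_corner0 (\<lambda>p. inv_into V (\<lambda>p. \<sigma> (\<psi> p)) (g (\<sigma> (\<psi> p)))) U"
      by (rule is_simple_corner0_cong[OF s0]) (use gW inv_eq in \<open>auto simp: W'_def\<close>)
  qed
qed

lemma simple_corner_at_translate:
  assumes "is_simple_corner0 (\<lambda>p. g (p + q) - q) U"
  shows "simple_corner_at g q"
proof -
  have hT: "holo3map UNIV (\<lambda>p. p + c)" for c :: c3
    unfolding holo3map_def by (auto intro!: holo3_add holo3_fst holo3_fst_snd holo3_snd_snd)
  have bT: "bij_betw (\<lambda>p. p + q) UNIV UNIV"
    by (rule bij_betw_byWitness[where f' = "\<lambda>p. p - q"]) auto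
  have invT: "inv_into UNIV (\<lambda>p. p + q) y = y + - q" for y
    by (rule inv_into_f_eq) (use bT in \<open>auto simp: bij_betw_def\<close>)
  have "is_simple_corner0 (\<lambda>p. inv_into UNIV (\<lambda>p. p + q) (g (p + q))) U"
    using assms by (simp add: invT)
  moreover have "holo3map UNIV (inv_into UNIV (\<lambda>p. p + q))"
    by (rule holo3map_cong[OF hT[of "- q"]]) (simp add: invT)
  ultimately show ?thesis unfolding simple_corner_at_def using bT hT[of q]
    by (intro exI[of _ "\<lambda>p. p + q"] exI[of _ UNIV] exI[of _ UNIV] exI[of _ U]) auto
qed

text \<open>When \<open>w0 \<noteq> 0\<close> the factor \<open>z\<^sup>e\<^sup>3\<close> of the monomial is a unit near the point and is
  absorbed into the coefficients.\<close>
lemma simple_corner_at_corner_shape: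
  assumes shape: "corner_shape g N e1 e2 e3 B1 B2 A3" and q: "(0,0,w0) \<in> N"
    and e: "e1 > 0" "e2 > 0"
    and nonres: "nonresonant (B1 (0,0,w0)) (B2 (0,0,w0))" and A0: "A3 (0,0,w0) = 0"
    and dvd: "w0 = 0 \<Longrightarrow> e3 > 0 \<Longrightarrow> \<exists>B3. holo3 N B3 \<and> (\<forall>p\<in>N. A3 p = snd (snd p) * B3 p)"
  shows "simple_corner_at g (0,0,w0)"
proof -
  have hB: "holo3 N B1" "holo3 N B2" "holo3 N A3"
    and g: "\<And>s u w. (s,u,w) \<in> N \<Longrightarrow> g (s,u,w) = corner_map e1 e2 e3 B1 B2 A3 (s,u,w)"
    using shape by (auto simp: corner_shape_def)
  define T where "T p = p + (0,0,w0)" for p :: c3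
  have hT: "holo3map UNIV T" unfolding T_def holo3map_def
    by (auto intro!: holo3_add holo3_fst holo3_fst_snd holo3_snd_snd)
  define U where "U = T -` N"
  have oU: "open U" unfolding U_def using holo3_vimage_compose(1)[OF hT hB(1)] .
  have compT: "holo3 U (\<lambda>p. B (T p))" if "holo3 N B" for B
    unfolding U_def using holo3_vimage_compose(2)[OF hT that] .
  have T0: "T 0 = (0,0,w0)" by (simp add: T_def)
  define W where "W p = (if w0 = 0 then 1 else (snd (snd p) + w0)^e3)" for p :: c3
  define e3' where "e3' = (if w0 = 0 then e3 else 0)"
  define lam' where "lam' = W 0 * B1 (0,0,w0)"
  define mu' where "mu' = W 0 * B2 (0,0,w0)"
  have hW: "holo3 U W"
    unfolding W_def using oU by (cases "w0 = 0") (auto intro!: holo3_power holo3_add holo3_snd_snd)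
  have "simple_corner_form (\<lambda>p. g (T p) - (0,0,w0)) e1 e2 e3' lam' mu'
      (\<lambda>p. W p * B1 (T p) - lam') (\<lambda>p. W p * B2 (T p) - mu') (\<lambda>p. W p * A3 (T p)) U"
    unfolding simple_corner_form_def
  proof (intro conjI allI impI)
    show "open U" "0 \<in> U" "0 < e1" "0 < e2" using oU q T0 e by (simp_all add: U_def)
    have "W 0 \<noteq> 0" by (simp add: W_def zero_prod_def)
    then have "nonresonant lam' mu'" using nonres nonresonant_scale by (simp add: lam'_def mu'_def)
    then show "lam' \<noteq> 0" "\<not> (\<exists>r. 0 < r \<and> mu' = lam' * of_rat r)"
      unfolding nonresonant_def by blast+
    show "holo3 U (\<lambda>p. W p * B1 (T p) - lam')" "holo3 U (\<lambda>p. W p * B2 (T p) - mu')"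
      "holo3 U (\<lambda>p. W p * A3 (T p))"
      by (intro holo3_diff holo3_mult hW compT hB holo3_const oU)+
    show "W 0 * B1 (T 0) - lam' = 0" "W 0 * B2 (T 0) - mu' = 0" "W 0 * A3 (T 0) = 0"
      using A0 by (auto simp: T0 lam'_def mu'_def)
    show "\<exists>R'. holo3 U R' \<and> (\<forall>p\<in>U. W p * A3 (T p) = snd (snd p) * R' p)"
      if "0 < e3'"
    proof -
      have w: "w0 = 0" "e3 > 0" using that by (auto simp: e3'_def split: if_splits)
      obtain B3 where B3: "holo3 N B3" "\<forall>p\<in>N. A3 p = snd (snd p) * B3 p" using dvd[OF w] by blast
      show ?thesis
      proof (intro exI conjI ballI)
        show "holo3 U (\<lambda>p. B3 (T p))" by (rule compT[OF B3(1)])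
        fix p assume "p \<in> U"
        then show "W p * A3 (T p) = snd (snd p) * B3 (T p)"
          using B3(2) w by (simp add: U_def W_def T_def)
      qed
    qed
    fix x y z assume "(x, y, z) \<in> U"
    then have "g (T (x,y,z)) = corner_map e1 e2 e3 B1 B2 A3 (x, y, z + w0)"
      by (simp add: U_def T_def g del: corner_map_apply)
    moreover have "z ^ e3' * W (x,y,z) = (z + w0) ^ e3" by (simp add: W_def e3'_def)
    ultimately show "g (T (x, y, z)) - (0, 0, w0) =
      (x + x ^ e1 * y ^ e2 * z ^ e3' * x * (lam' + (W (x, y, z) * B1 (T (x, y, z)) - lam')),
       y + x ^ e1 * y ^ e2 * z ^ e3' * y * (mu' + (W (x, y, z) * B2 (T (x, y, z)) - mu')),
       z + x ^ e1 * y ^ e2 * z ^ e3' * (W (x, y, z) * A3 (T (x, y, z))))"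
      by (simp add: T_def algebra_simps)
  qed
  then have "is_simple_corner0 (\<lambda>p. g (p + (0,0,w0)) - (0,0,w0)) U"
    unfolding is_simple_corner0_def T_def by blast
  then show ?thesis by (rule simple_corner_at_translate)
qed

lemma simple_corner_at_diagonal_shape:
  assumes "corner_shape g N e1 e2 e3 B1 B2 (\<lambda>p. snd (snd p) * B3 p)" "holo3 N B3"
    and "(0,0,w0) \<in> N" "e1 > 0" "e2 > 0"
    and "nonresonant (B1 (0,0,w0)) (B2 (0,0,w0))" "w0 * B3 (0,0,w0) = 0"
  shows "simple_corner_at g (0,0,w0)"
  using assms by (intro simple_corner_at_corner_shape[OF assms(1)]) auto

text \<open>At the origin all three coordinates are exceptional, and two of the three eigenvalues
  can always be chosen to play the roles of \<open>lam\<close> and \<open>mu\<close>.\<close>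
lemma simple_corner_at_diagonal_origin:
  assumes shape: "corner_shape g N e1 e2 e3 B1 B2 (\<lambda>p. snd (snd p) * B3 p)" "holo3 N B3"
    and "0 \<in> N" and e: "e1 > 0" "e2 > 0" "e3 > 0"
    and nonres: "nonresonant (B1 0 + B3 0) (B2 0 + B3 0)"
  shows "simple_corner_at g 0"
proof -
  have hB: "holo3 N B1" "holo3 N B2" using shape by (auto simp: corner_shape_def)
  have N0: "(0,0,0) \<in> N" using \<open>0 \<in> N\<close> by (simp add: zero_prod_def)
  consider "B3 0 = 0" | "B3 0 \<noteq> 0" "nonresonant (B3 0) (B2 0)" | "B3 0 \<noteq> 0" "nonresonant (B3 0) (B1 0)"
    using nonresonant_shift[OF nonres] by fastforce
  then have "simple_corner_at g (0,0,0)"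
  proof cases
    case 1
    then show ?thesis
      using nonres by (intro simple_corner_at_diagonal_shape[OF shape N0 e(1,2)]) (auto simp: zero_prod_def)
  next
    case 2
    have "simple_corner_at (\<lambda>p. swap13 (g (swap13 p))) (0,0,0)"
      using 2 N0 e holo3_vimage_compose(2)[OF holo3map_swap(2) hB(1)]
      by (intro simple_corner_at_diagonal_shape[OF corner_shape_swap13[OF shape]])
        (auto simp: zero_prod_def)
    from simple_corner_at_conj[where \<sigma> = swap13, OF this] show ?thesis by (simp add: holo3map_swap)
  next
    case 3
    have shape23: "corner_shape (\<lambda>p. swap23 (g (swap23 p))) (swap23 -` N) e1 e3 e2
        (\<lambda>p. B1 (swap23 p)) (\<lambda>p. B3 (swap23 p)) (\<lambda>p. snd (snd p) * B2 (swap23 p))"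
      by (rule corner_shape_swap23[OF shape])
    have "corner_shape (\<lambda>p. swap12 (swap23 (g (swap23 (swap12 p))))) (swap12 -` swap23 -` N) e3 e1 e2
        (\<lambda>p. B3 (swap23 (swap12 p))) (\<lambda>p. B1 (swap23 (swap12 p)))
        (\<lambda>p. snd (snd p) * B2 (swap23 (swap12 p)))"
      using corner_shape_swap12[OF shape23] by (simp add: swap12_def)
    then have "simple_corner_at (\<lambda>p. swap12 (swap23 (g (swap23 (swap12 p))))) (0,0,0)"
      by (rule simple_corner_at_diagonal_shape) (use 3 N0 e holo3_vimage_compose(2)[OF holo3map_swap(1)
          holo3_vimage_compose(2)[OF holo3map_swap(3) hB(2)]] in \<open>auto simp: zero_prod_def\<close>)
    from simple_corner_at_conj[where \<sigma> = swap23, OF simple_corner_at_conj[where \<sigma> = swap12, OF this]]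
    show ?thesis
      by (simp add: holo3map_swap)
  qed
  then show ?thesis by (simp add: zero_prod_def)
qed

subsection \<open>Blowing up the origin\<close>

lemma blow_chart_apply:
  "blow_chart 1 (s,u,w) = (s, s*u, s*w)" "blow_chart 2 (s,u,w) = (s*u, u, u*w)"
  "blow_chart 3 (s,u,w) = (s*w, u*w, w)"
  by (simp_all add: blow_chart_def)

declare blow_chart_apply [simplified, simp]

lemma blow_chart_2_swap12: "blow_chart 2 p = swap12 (blow_chart 1 (swap12 p))"
  by (cases p) (simp add: blow_chart_def)

lemma holo3map_blow_chart: "holo3map UNIV (blow_chart 1)" "holo3map UNIV (blow_chart 3)"
proof -
  have "blow_chart 1 = (\<lambda>p. (fst p, fst p * fst (snd p), fst p * snd (snd p)))"
    "blow_chart 3 = (\<lambda>p. (fst p * snd (snd p), fst (snd p) * snd (snd p), snd (snd p)))"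
    by (simp_all add: fun_eq_iff blow_chart_def Let_def case_prod_beta)
  then show "holo3map UNIV (blow_chart 1)" "holo3map UNIV (blow_chart 3)"
    unfolding holo3map_def by (auto intro!: holo3_mult holo3_fst holo3_fst_snd holo3_snd_snd)
qed

lemma lift_simple_corner_atI:
  assumes "corner_shape g N e1 e2 e3 B1 B2 A3" "q \<in> N"
    and "\<forall>p\<in>N. blow_chart i (g p) = f (blow_chart i p)" "simple_corner_at g q"
  shows "lift_simple_corner_at f i q"
proof -
  have "open N" using assms(1) by (simp add: corner_shape_def)
  then show ?thesis
    unfolding lift_simple_corner_at_def using assms corner_shape_holo3map[OF assms(1)] by blast
qed

lemma holo3_quotient_value:
  assumes R: "has_holo3_derivative R DR 0" and \<rho>: "holo3 V \<rho>" and p0: "p0 \<in> V"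
    and eq: "\<And>t. p0 + smul3 t e \<in> V \<Longrightarrow> R (smul3 t v) = t * \<rho> (p0 + smul3 t e)"
  shows "\<rho> p0 = DR v"
proof -
  define S where "S = (\<lambda>t. p0 + smul3 t e) -` V"
  have oS: "open S" unfolding S_def
    by (rule open_vimage[OF holo3_open[OF \<rho>]]) (auto simp: smul3_def intro!: continuous_intros)
  have S0: "0 \<in> S" using p0 by (simp add: S_def)
  obtain D\<rho> where D\<rho>: "has_holo3_derivative \<rho> D\<rho> (p0 + smul3 0 e)" using holo3D[OF \<rho> p0] by auto
  have "((\<lambda>t. t * \<rho> (p0 + smul3 t e)) has_field_derivative 1 * \<rho> (p0 + smul3 0 e) + D\<rho> e * 0) (at 0)"
    by (intro DERIV_mult DERIV_ident has_holo3_derivative_line D\<rho>)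
  then have d1: "((\<lambda>t. t * \<rho> (p0 + smul3 t e)) has_field_derivative \<rho> p0) (at 0)" by simp
  have "((\<lambda>t. t * \<rho> (p0 + smul3 t e)) has_field_derivative DR v) (at 0)"
    by (rule has_field_derivative_transform_within_open[OF has_holo3_derivative_line0[OF R] oS S0])
      (simp add: S_def eq)
  then show ?thesis using d1 DERIV_unique by blast
qed

context corner
begin

lemma blow_chart1_corner_map:
  fixes s u w r :: complex
  defines "m \<equiv> s^(a+b+c) * u^b * w^c"
  assumes U: "(s, s*u, s*w) \<in> U" and R: "R (s, s*u, s*w) = s * r"
    and B1: "B1 (s,u,w) = lam + P (s, s*u, s*w)"
    and B2: "B2 (s,u,w) * (1 + m * B1 (s,u,w)) = mu + Q (s, s*u, s*w) - B1 (s,u,w)"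
    and A3: "A3 (s,u,w) * (1 + m * B1 (s,u,w)) = r - w * B1 (s,u,w)"
  shows "blow_chart 1 (corner_map (a+b+c) b c B1 B2 A3 (s,u,w)) = f (blow_chart 1 (s,u,w))"
proof -
  have m: "s^a * (s*u)^b * (s*w)^c = m" by (simp add: m_def power_mult_distrib power_add)
  let ?B1 = "B1 (s,u,w)" and ?B2 = "B2 (s,u,w)" and ?A3 = "A3 (s,u,w)"
  have "(s + m * (s * ?B1)) * (u + m * (u * ?B2)) = s * u * ((1 + m * ?B1) + m * (?B2 * (1 + m * ?B1)))"
    by (simp add: algebra_simps)
  also have "\<dots> = s * u + m * (s * u) * (mu + Q (s, s*u, s*w))"
    unfolding B2 by (simp add: algebra_simps)
  finally have 2: "(s + m * (s * ?B1)) * (u + m * (u * ?B2)) = s * u + m * (s * u) * (mu + Q (s, s*u, s*w))" .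
  have "(s + m * (s * ?B1)) * (w + m * ?A3) = s * (w + m * w * ?B1 + m * (?A3 * (1 + m * ?B1)))"
    by (simp add: algebra_simps)
  also have "\<dots> = s * w + m * R (s, s*u, s*w)"
    unfolding A3 R by (simp add: algebra_simps)
  finally have 3: "(s + m * (s * ?B1)) * (w + m * ?A3) = s * w + m * R (s, s*u, s*w)" .
  show ?thesis
    unfolding corner_map_apply m_def[symmetric] blow_chart_apply f_eq[OF U] m 2 3
    by (simp add: B1 algebra_simps)
qed

lemma blow_chart3_corner_map:
  fixes s u w :: complex
  defines "m \<equiv> s^a * u^b * w^(a+b+c)"
  assumes U: "(s*w, u*w, w) \<in> U" and R: "R (s*w, u*w, w) = w * \<rho> (s,u,w)"
    and B1: "B1 (s,u,w) * (1 + m * \<rho> (s,u,w)) = lam + P (s*w, u*w, w) - \<rho> (s,u,w)"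
    and B2: "B2 (s,u,w) * (1 + m * \<rho> (s,u,w)) = mu + Q (s*w, u*w, w) - \<rho> (s,u,w)"
  shows "blow_chart 3 (corner_map a b (a+b+c) B1 B2 (\<lambda>p. snd (snd p) * \<rho> p) (s,u,w)) = f (blow_chart 3 (s,u,w))"
proof -
  have m: "(s*w)^a * (u*w)^b * w^c = m" by (simp add: m_def power_mult_distrib power_add)
  let ?r = "\<rho> (s,u,w)"
  have 1: "(s + m * (s * B1 (s,u,w))) * (w + m * (w * ?r)) = s * w + m * (s * w) * (lam + P (s*w, u*w, w))"
  proof -
    have "(s + m * (s * B1 (s,u,w))) * (w + m * (w * ?r)) = s * w * ((1 + m * ?r) + m * (B1 (s,u,w) * (1 + m * ?r)))"
      by (simp add: algebra_simps)
    then show ?thesis unfolding B1 by (simp add: algebra_simps)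
  qed
  have 2: "(u + m * (u * B2 (s,u,w))) * (w + m * (w * ?r)) = u * w + m * (u * w) * (mu + Q (s*w, u*w, w))"
  proof -
    have "(u + m * (u * B2 (s,u,w))) * (w + m * (w * ?r)) = u * w * ((1 + m * ?r) + m * (B2 (s,u,w) * (1 + m * ?r)))"
      by (simp add: algebra_simps)
    then show ?thesis unfolding B2 by (simp add: algebra_simps)
  qed
  show ?thesis
    unfolding corner_map_apply m_def[symmetric] blow_chart_apply f_eq[OF U] m 1 2 R snd_conv
    by (simp add: algebra_simps)
qed

lemma chart1_R_quotient:
  obtains V \<rho> where "open V" "(0,0,w0) \<in> V" "V \<subseteq> blow_chart 1 -` U" "holo3 V \<rho>"
    "\<forall>p\<in>V. R (blow_chart 1 p) = fst p * \<rho> p"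
    "c > 0 \<longrightarrow> (\<exists>R'. holo3 V R' \<and> (\<forall>p\<in>V. \<rho> p = snd (snd p) * R' p))"
proof -
  note \<Omega> = holo3_vimage_compose[OF holo3map_blow_chart(1)]
  have q: "(0,0,w0) \<in> blow_chart 1 -` U" using zero_in_U by (simp add: zero_prod_def)
  show thesis
  proof (cases "c > 0")
    case True
    obtain R' where R': "holo3 U R'" "\<forall>p\<in>U. R p = snd (snd p) * R' p" using R_divisible[OF True] by blast
    show thesis
    proof (rule that[of "blow_chart 1 -` U" "\<lambda>p. snd (snd p) * R' (blow_chart 1 p)"])
      show "holo3 (blow_chart 1 -` U) (\<lambda>p. snd (snd p) * R' (blow_chart 1 p))"
        using \<Omega>[OF R'(1)] by (intro holo3_mult holo3_snd_snd) auto
      show "\<forall>p\<in>blow_chart 1 -` U. R (blow_chart 1 p) = fst p * (snd (snd p) * R' (blow_chart 1 p))"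
        using R'(2) by (auto simp: blow_chart_def)
    qed (use \<Omega>[OF R'(1)] q in auto)
  next
    case False
    have "R (blow_chart 1 (0,u,w)) = 0" for u w using R0 by (simp add: zero_prod_def)
    then show thesis
      using holo3_divisible_fst[OF \<Omega>(2)[OF holo_R] q] that False by blast
  qed
qed

lemma chart1_quotient_value:
  assumes "holo3 V \<rho>" "(0,u0,w0) \<in> V" "\<forall>p\<in>V. R (blow_chart 1 p) = fst p * \<rho> p"
  shows "\<rho> (0,u0,w0) = \<alpha> + \<beta> * u0 + \<gamma> * w0"
proof -
  obtain DR where DR: "has_holo3_derivative R DR 0"
    and DR_eq: "\<And>v. DR v = \<alpha> * fst v + \<beta> * fst (snd v) + \<gamma> * snd (snd v)"
    using R_derivative_at_0 by blast
  have "\<rho> (0,u0,w0) = DR (1,u0,w0)"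
  proof (rule holo3_quotient_value[OF DR assms(1,2)])
    fix t assume "(0,u0,w0) + smul3 t (1,0,0) \<in> V"
    with assms(3) show "R (smul3 t (1,u0,w0)) = t * \<rho> ((0,u0,w0) + smul3 t (1,0,0))"
      by (auto simp: smul3_def)
  qed
  then show ?thesis by (simp add: DR_eq)
qed

lemma chart1_lift:
  obtains g N B1 B2 A3 where "(0,0,w0) \<in> N" "corner_shape g N (a+b+c) b c B1 B2 A3"
    "\<forall>p\<in>N. blow_chart 1 (g p) = f (blow_chart 1 p)"
    "B1 (0,0,w0) = lam" "B2 (0,0,w0) = mu - lam" "A3 (0,0,w0) = \<alpha> + \<gamma> * w0 - lam * w0"
    "c > 0 \<longrightarrow> (\<exists>B3. holo3 N B3 \<and> (\<forall>p\<in>N. A3 p = snd (snd p) * B3 p))"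
proof -
  obtain V \<rho> where V: "open V" "(0,0,w0) \<in> V" "V \<subseteq> blow_chart 1 -` U" "holo3 V \<rho>"
    and R\<rho>: "\<forall>p\<in>V. R (blow_chart 1 p) = fst p * \<rho> p"
    and \<rho>_dvd: "c > 0 \<longrightarrow> (\<exists>R'. holo3 V R' \<and> (\<forall>p\<in>V. \<rho> p = snd (snd p) * R' p))"
    by (rule chart1_R_quotient[of w0])
  have comp: "holo3 V (\<lambda>p. F (blow_chart 1 p))" if "holo3 U F" for F
    by (rule holo3_compose_map[OF holo3map_subset[OF holo3map_blow_chart(1) V(1)] that])
      (use V(3) in auto)
  define M where "M p = fst p ^ (a+b+c) * fst (snd p) ^ b * snd (snd p) ^ c" for p :: c3
  define B1 where "B1 p = lam + P (blow_chart 1 p)" for p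
  define D where "D p = 1 + M p * B1 p" for p
  define N where "N = {p \<in> V. D p \<noteq> 0}"
  define B2 where "B2 p = (mu + Q (blow_chart 1 p) - B1 p) / D p" for p
  define A3 where "A3 p = (\<rho> p - snd (snd p) * B1 p) / D p" for p
  have hM: "holo3 V M" unfolding M_def
    by (intro holo3_mult holo3_power holo3_fst holo3_fst_snd holo3_snd_snd V(1))
  have hV: "holo3 V B1" "holo3 V D" "holo3 V (\<lambda>p. Q (blow_chart 1 p))"
    unfolding B1_def D_def
    by (intro holo3_add holo3_mult holo3_const comp holo_P holo_Q V(1) hM)+
  have oN: "open N" unfolding N_def using open_holo3_nonzero[OF hV(2)] .
  have hN: "holo3 N F" if "holo3 V F" for F using holo3_subset[OF that oN] by (auto simp: N_def)
  have q: "(0,0,w0) \<in> N" "D (0,0,w0) = 1" "B1 (0,0,w0) = lam"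
    using V(2) a_pos P0 by (simp_all add: N_def D_def M_def B1_def zero_prod_def power_0_left)
  show thesis
  proof (rule that[of N "corner_map (a+b+c) b c B1 B2 A3" B1 B2 A3])
    show "(0,0,w0) \<in> N" by (fact q)
    show "corner_shape (corner_map (a+b+c) b c B1 B2 A3) N (a+b+c) b c B1 B2 A3"
      unfolding corner_shape_def B2_def A3_def
      by (intro conjI ballI refl oN holo3_divide holo3_diff holo3_add holo3_mult holo3_const holo3_snd_snd hN
          hV V(4)) (simp_all add: N_def)
    show "\<forall>p\<in>N. blow_chart 1 (corner_map (a+b+c) b c B1 B2 A3 p) = f (blow_chart 1 p)"
    proof
      fix p assume pN: "p \<in> N"
      obtain s u w where p: "p = (s,u,w)" by (cases p)
      have D: "D p \<noteq> 0" and "M p = s^(a+b+c) * u^b * w^c" using pN by (simp_all add: N_def M_def p)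
      with pN V(3) R\<rho> show "blow_chart 1 (corner_map (a+b+c) b c B1 B2 A3 p) = f (blow_chart 1 p)"
        unfolding p by (intro blow_chart1_corner_map[where r = "\<rho> p"])
          (auto simp: N_def p B1_def B2_def A3_def D_def)
    qed
    show "B1 (0,0,w0) = lam" "B2 (0,0,w0) = mu - lam" using q Q0 by (simp_all add: B2_def zero_prod_def)
    show "A3 (0,0,w0) = \<alpha> + \<gamma> * w0 - lam * w0"
      using q chart1_quotient_value[OF V(4) V(2) R\<rho>] by (simp add: A3_def)
    show "c > 0 \<longrightarrow> (\<exists>B3. holo3 N B3 \<and> (\<forall>p\<in>N. A3 p = snd (snd p) * B3 p))"
    proof
      assume "c > 0"
      then obtain R' where R': "holo3 V R'" "\<forall>p\<in>V. \<rho> p = snd (snd p) * R' p" using \<rho>_dvd by blast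
      show "\<exists>B3. holo3 N B3 \<and> (\<forall>p\<in>N. A3 p = snd (snd p) * B3 p)"
      proof (intro exI conjI ballI)
        show "holo3 N (\<lambda>p. (R' p - B1 p) / D p)"
          by (intro holo3_divide holo3_diff hN hV R'(1)) (simp add: N_def)
        show "A3 p = snd (snd p) * ((R' p - B1 p) / D p)" if "p \<in> N" for p
          using R'(2) that by (simp add: N_def A3_def right_diff_distrib)
      qed
    qed
  qed
qed

lemma lift_simple_corner_at_chart1:
  assumes "nonresonant lam mu" "\<alpha> + \<gamma> * w0 = lam * w0"
  shows "lift_simple_corner_at f 1 (0,0,w0)"
proof -
  obtain g N B1 B2 A3 where q: "(0,0,w0) \<in> N" and shape: "corner_shape g N (a+b+c) b c B1 B2 A3"
    and lift: "\<forall>p\<in>N. blow_chart 1 (g p) = f (blow_chart 1 p)"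
    and B: "B1 (0,0,w0) = lam" "B2 (0,0,w0) = mu - lam" "A3 (0,0,w0) = \<alpha> + \<gamma> * w0 - lam * w0"
    and dvd: "c > 0 \<longrightarrow> (\<exists>B3. holo3 N B3 \<and> (\<forall>p\<in>N. A3 p = snd (snd p) * B3 p))"
    by (rule chart1_lift)
  have "simple_corner_at g (0,0,w0)"
    by (rule simple_corner_at_corner_shape[OF shape q])
      (use a_pos b_pos B assms dvd nonresonant_diff_right in auto)
  then show ?thesis by (rule lift_simple_corner_atI[OF shape q lift])
qed

lemma corner_swap12:
  "corner (\<lambda>p. swap12 (f (swap12 p))) b a c mu lam (\<lambda>p. Q (swap12 p)) (\<lambda>p. P (swap12 p))
     (\<lambda>p. R (swap12 p)) (swap12 -` U)"
proof unfold_locales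
  note comp = holo3_vimage_compose[OF holo3map_swap(1)]
  have [simp]: "swap12 0 = 0" by (simp add: swap12_def zero_prod_def)
  show "open (swap12 -` U)" by (rule comp(1)[OF holo_P])
  show "holo3 (swap12 -` U) (\<lambda>p. Q (swap12 p))" "holo3 (swap12 -` U) (\<lambda>p. P (swap12 p))"
    "holo3 (swap12 -` U) (\<lambda>p. R (swap12 p))"
    by (rule comp(2), fact holo_Q, rule comp(2), fact holo_P, rule comp(2), fact holo_R)
  show "0 \<in> swap12 -` U" "Q (swap12 0) = 0" "P (swap12 0) = 0" "R (swap12 0) = 0"
    using zero_in_U P0 Q0 R0 by simp_all
  show "\<exists>R'. holo3 (swap12 -` U) R' \<and> (\<forall>p\<in>swap12 -` U. R (swap12 p) = snd (snd p) * R' p)" if c: "c > 0"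
  proof -
    obtain R' where R': "holo3 U R'" "\<forall>p\<in>U. R p = snd (snd p) * R' p" using R_divisible[OF c] by blast
    then show ?thesis using comp(2)[OF R'(1)] by (auto simp: swap12_def)
  qed
  fix x y z assume "(x, y, z) \<in> swap12 -` U"
  then show "swap12 (f (swap12 (x, y, z))) =
      (x + x ^ b * y ^ a * z ^ c * x * (mu + Q (swap12 (x, y, z))),
       y + x ^ b * y ^ a * z ^ c * y * (lam + P (swap12 (x, y, z))),
       z + x ^ b * y ^ a * z ^ c * R (swap12 (x, y, z)))"
    by (simp add: f_eq ac_simps)
qed (use a_pos b_pos in auto)

lemma lift_simple_corner_at_chart2:
  assumes "nonresonant lam mu" "\<beta> + \<gamma> * w0 = mu * w0"
  shows "lift_simple_corner_at f 2 (0,0,w0)"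
proof -
  interpret sw: corner "\<lambda>p. swap12 (f (swap12 p))" b a c mu lam "\<lambda>p. Q (swap12 p)" "\<lambda>p. P (swap12 p)"
    "\<lambda>p. R (swap12 p)" "swap12 -` U"
    by (rule corner_swap12)
  obtain g N B1 B2 A3 where q: "(0,0,w0) \<in> N" and shape: "corner_shape g N (b+a+c) a c B1 B2 A3"
    and lift: "\<forall>p\<in>N. blow_chart 1 (g p) = swap12 (f (swap12 (blow_chart 1 p)))"
    and B: "B1 (0,0,w0) = mu" "B2 (0,0,w0) = lam - mu"
      "A3 (0,0,w0) = sw.\<alpha> + sw.\<gamma> * w0 - mu * w0"
    and dvd: "c > 0 \<longrightarrow> (\<exists>B3. holo3 N B3 \<and> (\<forall>p\<in>N. A3 p = snd (snd p) * B3 p))"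
    by (rule sw.chart1_lift)
  have A0: "A3 (0,0,w0) = 0" using B(3) assms(2) by simp
  note shape' = corner_shape_swap12[OF shape]
  have q': "(0,0,w0) \<in> swap12 -` N" using q by simp
  have "simple_corner_at (\<lambda>p. swap12 (g (swap12 p))) (0,0,w0)"
  proof (rule simple_corner_at_corner_shape[OF shape' q'])
    show "nonresonant (B2 (swap12 (0,0,w0))) (B1 (swap12 (0,0,w0)))"
      using B nonresonant_diff_left[OF assms(1)] by simp
    show "\<exists>B3. holo3 (swap12 -` N) B3 \<and> (\<forall>p\<in>swap12 -` N. A3 (swap12 p) = snd (snd p) * B3 p)"
      if c: "c > 0"
    proof -
      obtain B3 where "holo3 N B3" "\<forall>p\<in>N. A3 p = snd (snd p) * B3 p" using dvd c by blast
      then show ?thesis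
        using holo3_vimage_compose(2)[OF holo3map_swap(1)] by (auto simp: swap12_def)
    qed
  qed (use a_pos A0 in auto)
  moreover have "\<forall>p\<in>swap12 -` N. blow_chart 2 (swap12 (g (swap12 p))) = f (blow_chart 2 p)"
    using lift by (simp add: blow_chart_2_swap12)
  ultimately show ?thesis by (intro lift_simple_corner_atI[OF shape' q'])
qed

lemma chart3_quotient_value:
  assumes "holo3 V \<rho>" "(s0,u0,0) \<in> V" "\<forall>p\<in>V. R (blow_chart 3 p) = snd (snd p) * \<rho> p"
  shows "\<rho> (s0,u0,0) = \<alpha> * s0 + \<beta> * u0 + \<gamma>"
proof -
  obtain DR where DR: "has_holo3_derivative R DR 0"
    and DR_eq: "\<And>v. DR v = \<alpha> * fst v + \<beta> * fst (snd v) + \<gamma> * snd (snd v)"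
    using R_derivative_at_0 by blast
  have "\<rho> (s0,u0,0) = DR (s0,u0,1)"
  proof (rule holo3_quotient_value[OF DR assms(1,2)])
    fix t assume "(s0,u0,0) + smul3 t (0,0,1) \<in> V"
    with assms(3) show "R (smul3 t (s0,u0,1)) = t * \<rho> ((s0,u0,0) + smul3 t (0,0,1))"
      by (auto simp: smul3_def mult.commute)
  qed
  then show ?thesis by (simp add: DR_eq)
qed

lemma chart3_lift:
  obtains g N B1 B2 \<rho> where "(s0,u0,0) \<in> N"
    "corner_shape g N a b (a+b+c) B1 B2 (\<lambda>p. snd (snd p) * \<rho> p)" "holo3 N \<rho>"
    "\<forall>p\<in>N. blow_chart 3 (g p) = f (blow_chart 3 p)"
    "\<rho> (s0,u0,0) = \<alpha> * s0 + \<beta> * u0 + \<gamma>"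
    "B1 (s0,u0,0) = lam - \<rho> (s0,u0,0)" "B2 (s0,u0,0) = mu - \<rho> (s0,u0,0)"
proof -
  note \<Omega> = holo3_vimage_compose[OF holo3map_blow_chart(2)]
  have "\<exists>V k. open V \<and> (s0,u0,0) \<in> V \<and> V \<subseteq> blow_chart 3 -` U \<and> holo3 V k \<and>
      (\<forall>p\<in>V. R (blow_chart 3 p) = snd (snd p) * k p)"
    by (rule holo3_divisible_snd_snd[OF \<Omega>(2)[OF holo_R]]) (use zero_in_U R0 in \<open>simp_all add: zero_prod_def\<close>)
  then obtain V \<rho> where V: "open V" "(s0,u0,0) \<in> V" "V \<subseteq> blow_chart 3 -` U" "holo3 V \<rho>"
    and R\<rho>: "\<forall>p\<in>V. R (blow_chart 3 p) = snd (snd p) * \<rho> p"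
    by blast
  have comp: "holo3 V (\<lambda>p. F (blow_chart 3 p))" if "holo3 U F" for F
    by (rule holo3_compose_map[OF holo3map_subset[OF holo3map_blow_chart(2) V(1)] that])
      (use V(3) in auto)
  define M where "M p = fst p ^ a * fst (snd p) ^ b * snd (snd p) ^ (a+b+c)" for p :: c3
  define D where "D p = 1 + M p * \<rho> p" for p
  define N where "N = {p \<in> V. D p \<noteq> 0}"
  define B1 where "B1 p = (lam + P (blow_chart 3 p) - \<rho> p) / D p" for p
  define B2 where "B2 p = (mu + Q (blow_chart 3 p) - \<rho> p) / D p" for p
  have hM: "holo3 V M" unfolding M_def
    by (intro holo3_mult holo3_power holo3_fst holo3_fst_snd holo3_snd_snd V(1))
  have hD: "holo3 V D" unfolding D_def by (intro holo3_add holo3_mult holo3_const hM V)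
  have oN: "open N" unfolding N_def using open_holo3_nonzero[OF hD] .
  have hN: "holo3 N F" if "holo3 V F" for F using holo3_subset[OF that oN] by (auto simp: N_def)
  have q: "(s0,u0,0) \<in> N" "D (s0,u0,0) = 1"
    using V(2) a_pos by (simp_all add: N_def D_def M_def power_0_left)
  show thesis
  proof (rule that[of N "corner_map a b (a+b+c) B1 B2 (\<lambda>p. snd (snd p) * \<rho> p)" B1 B2 \<rho>])
    show "(s0,u0,0) \<in> N" by (fact q)
    show "holo3 N \<rho>" by (rule hN[OF V(4)])
    show "corner_shape (corner_map a b (a+b+c) B1 B2 (\<lambda>p. snd (snd p) * \<rho> p)) N a b (a+b+c) B1 B2
        (\<lambda>p. snd (snd p) * \<rho> p)"
      unfolding corner_shape_def B1_def B2_def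
      by (intro conjI ballI refl oN holo3_divide holo3_diff holo3_add holo3_mult holo3_const holo3_snd_snd hN
          hD V(4) comp holo_P holo_Q) (simp_all add: N_def)
    show "\<forall>p\<in>N. blow_chart 3 (corner_map a b (a+b+c) B1 B2 (\<lambda>p. snd (snd p) * \<rho> p) p) = f (blow_chart 3 p)"
    proof
      fix p assume pN: "p \<in> N"
      obtain s u w where p: "p = (s,u,w)" by (cases p)
      have D: "D p \<noteq> 0" and "M p = s^a * u^b * w^(a+b+c)" using pN by (simp_all add: N_def M_def p)
      with pN V(3) R\<rho> show "blow_chart 3 (corner_map a b (a+b+c) B1 B2 (\<lambda>p. snd (snd p) * \<rho> p) p)
          = f (blow_chart 3 p)"
        unfolding p by (intro blow_chart3_corner_map) (auto simp: N_def p B1_def B2_def D_def)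
    qed
    show "\<rho> (s0,u0,0) = \<alpha> * s0 + \<beta> * u0 + \<gamma>" by (rule chart3_quotient_value[OF V(4) V(2) R\<rho>])
    show "B1 (s0,u0,0) = lam - \<rho> (s0,u0,0)" "B2 (s0,u0,0) = mu - \<rho> (s0,u0,0)"
      using q P0 Q0 by (simp_all add: B1_def B2_def zero_prod_def)
  qed
qed

lemma lift_simple_corner_at_chart3:
  assumes nonres: "nonresonant lam mu"
    and s0: "s0 \<noteq> 0 \<Longrightarrow> u0 = 0 \<and> \<alpha> * s0 + \<gamma> = lam"
    and u0: "u0 \<noteq> 0 \<Longrightarrow> s0 = 0 \<and> \<beta> * u0 + \<gamma> = mu"
  shows "lift_simple_corner_at f 3 (s0,u0,0)"
proof -
  obtain g N B1 B2 \<rho> where q: "(s0,u0,0) \<in> N"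
    and shape: "corner_shape g N a b (a+b+c) B1 B2 (\<lambda>p. snd (snd p) * \<rho> p)" and h\<rho>: "holo3 N \<rho>"
    and lift: "\<forall>p\<in>N. blow_chart 3 (g p) = f (blow_chart 3 p)"
    and \<rho>q: "\<rho> (s0,u0,0) = \<alpha> * s0 + \<beta> * u0 + \<gamma>"
    and B: "B1 (s0,u0,0) = lam - \<rho> (s0,u0,0)" "B2 (s0,u0,0) = mu - \<rho> (s0,u0,0)"
    by (rule chart3_lift)
  have hB: "holo3 N B1" "holo3 N B2" using shape by (auto simp: corner_shape_def)
  have "simple_corner_at g (s0,u0,0)"
  proof (cases "s0 = 0")
    case False
    with s0 have "u0 = 0" "\<rho> (s0,u0,0) = lam" using \<rho>q by auto
    then have "simple_corner_at (\<lambda>p. swap13 (g (swap13 p))) (0,0,s0)"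
      using q B nonresonant_diff_right[OF nonres] a_pos b_pos
      by (intro simple_corner_at_diagonal_shape[OF corner_shape_swap13[OF shape h\<rho>]]
          holo3_vimage_compose(2)[OF holo3map_swap(2) hB(1)]) auto
    from simple_corner_at_conj[where \<sigma> = swap13, OF this] \<open>u0 = 0\<close> show ?thesis
      by (simp add: holo3map_swap)
  next
    case True
    show ?thesis
    proof (cases "u0 = 0")
      case False
      with u0 have "\<rho> (s0,u0,0) = mu" using \<rho>q True by auto
      then have "simple_corner_at (\<lambda>p. swap23 (g (swap23 p))) (0,0,u0)"
        using q B True nonresonant_diff_left[OF nonres] a_pos
        by (intro simple_corner_at_diagonal_shape[OF corner_shape_swap23[OF shape h\<rho>]]
            holo3_vimage_compose(2)[OF holo3map_swap(3) hB(2)]) auto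
      from simple_corner_at_conj[where \<sigma> = swap23, OF this] True show ?thesis
        by (simp add: holo3map_swap)
    next
      case u: True
      have "simple_corner_at g 0"
        using q B nonres True u a_pos b_pos
        by (intro simple_corner_at_diagonal_origin[OF shape h\<rho>]) (auto simp: zero_prod_def)
      then show ?thesis using True u by (simp add: zero_prod_def)
    qed
  qed
  then show ?thesis by (rule lift_simple_corner_atI[OF shape q lift])
qed

lemma lift_simple_corner_at_eigendirection:
  assumes nonres: "nonresonant lam mu" and eig: "corner_linear lam mu \<alpha> \<beta> \<gamma> v = smul3 l v"
    and i: "i \<in> {1, 2, 3}" and vi: "comp3 i v \<noteq> 0"
  shows "lift_simple_corner_at f i (chart_point i v)"
proof -
  obtain x y z where v: "v = (x,y,z)" by (cases v)
  note ml = nonresonant_imp_neq[OF nonres]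
  note eig_x = corner_linear_eigen_fst[OF eig[unfolded v] _ ml]
  note eig_y = corner_linear_eigen_fst_snd[OF eig[unfolded v] _ ml]
  consider "i = 1" "x \<noteq> 0" | "i = 2" "y \<noteq> 0" | "i = 3" "z \<noteq> 0"
    using i vi by (auto simp: comp3_def v)
  then show ?thesis
  proof cases
    case 1
    then have "\<alpha> + \<gamma> * (z / x) = lam * (z / x)" using eig_x by (simp add: field_simps)
    then show ?thesis using 1 eig_x lift_simple_corner_at_chart1[OF nonres] by (simp add: chart_point_def v)
  next
    case 2
    then have "\<beta> + \<gamma> * (z / y) = mu * (z / y)" using eig_y by (simp add: field_simps)
    then show ?thesis using 2 eig_y lift_simple_corner_at_chart2[OF nonres] by (simp add: chart_point_def v)
  next
    case 3
    then show ?thesis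
      using eig_x eig_y lift_simple_corner_at_chart3[OF nonres, of "x / z" "y / z"]
      by (simp add: chart_point_def v field_simps)
  qed
qed

lemma sing_dir_iff_explicit:
  assumes "nonresonant lam mu"
  shows "sing_dir f monomial v \<longleftrightarrow> v \<noteq> 0 \<and>
      ((if \<alpha> \<noteq> 0 \<or> lam - \<gamma> \<noteq> 0 then proj_eq v (lam - \<gamma>, 0, \<alpha>) else fst (snd v) = 0)
       \<or> (if \<beta> \<noteq> 0 \<or> mu - \<gamma> \<noteq> 0 then proj_eq v (0, mu - \<gamma>, \<beta>) else fst v = 0)
       \<or> proj_eq v (0, 0, 1))"
proof (cases "v = 0")
  case False
  obtain x y z where v: "v = (x,y,z)" by (cases v)
  have "lam \<noteq> 0" using assms by (simp add: nonresonant_def)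
  with False show ?thesis
    unfolding v fst_conv snd_conv sing_dir_iff[OF \<open>lam \<noteq> 0\<close>]
      corner_linear_eigen_iff[OF nonresonant_imp_neq[OF assms]]
      proj_eq_fst_line_iff[OF False[unfolded v]] proj_eq_fst_snd_line_iff[OF False[unfolded v]]
      proj_eq_snd_snd_axis_iff
    by (auto simp: zero_prod_def)
qed (simp add: sing_dir_def)

end

theorem proposition3p16:
  fixes f :: "c3 \<Rightarrow> c3" and a b c :: nat and lam mu :: complex
    and P Q R :: "c3 \<Rightarrow> complex" and U :: "c3 set"
  assumes "simple_corner_form f a b c lam mu P Q R U"
  defines "\<alpha> \<equiv> deriv (\<lambda>t. R (t, 0, 0)) 0"
      and "\<beta> \<equiv> deriv (\<lambda>t. R (0, t, 0)) 0"
      and "\<gamma> \<equiv> deriv (\<lambda>t. R (0, 0, t)) 0"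
      and "l \<equiv> (\<lambda>(x, y, z). x ^ a * y ^ b * z ^ c)"
  shows "(\<forall>v. sing_dir f l v \<longleftrightarrow>
            v \<noteq> 0 \<and>
            ((if \<alpha> \<noteq> 0 \<or> lam - \<gamma> \<noteq> 0 then proj_eq v (lam - \<gamma>, 0, \<alpha>)
              else fst (snd v) = 0)
             \<or> (if \<beta> \<noteq> 0 \<or> mu - \<gamma> \<noteq> 0 then proj_eq v (0, mu - \<gamma>, \<beta>)
              else fst v = 0)
             \<or> proj_eq v (0, 0, 1)))
       \<and> (\<forall>v. sing_dir f l v \<longrightarrow> exceptional a b c v)
       \<and> (\<forall>v. sing_dir f l v \<longrightarrow>
            (\<forall>i\<in>{1, 2, 3}. comp3 i v \<noteq> 0 \<longrightarrow> lift_simple_corner_at f i (chart_point i v)))"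
proof -
  interpret corner f a b c lam mu P Q R U
    using assms(1) unfolding simple_corner_form_iff by (rule conjunct1)
  have nonres: "nonresonant lam mu" using assms(1) simple_corner_form_iff by blast
  have ml: "mu \<noteq> lam" by (rule nonresonant_imp_neq[OF nonres])
  have sd: "sing_dir f l v \<longleftrightarrow> v \<noteq> 0 \<and> (\<exists>l'. corner_linear lam mu \<alpha> \<beta> \<gamma> v = smul3 l' v)" for v
    unfolding l_def \<alpha>_def \<beta>_def \<gamma>_def by (rule sing_dir_iff) (use nonres in \<open>simp add: nonresonant_def\<close>)
  have "sing_dir f l v \<longleftrightarrow> v \<noteq> 0 \<and>
      ((if \<alpha> \<noteq> 0 \<or> lam - \<gamma> \<noteq> 0 then proj_eq v (lam - \<gamma>, 0, \<alpha>) else fst (snd v) = 0)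
       \<or> (if \<beta> \<noteq> 0 \<or> mu - \<gamma> \<noteq> 0 then proj_eq v (0, mu - \<gamma>, \<beta>) else fst v = 0)
       \<or> proj_eq v (0, 0, 1))" for v
    unfolding l_def \<alpha>_def \<beta>_def \<gamma>_def by (rule sing_dir_iff_explicit[OF nonres])
  moreover have "exceptional a b c v" if "sing_dir f l v" for v
    using that exceptional_eigendirection[OF ml] unfolding sd \<alpha>_def \<beta>_def \<gamma>_def by blast
  moreover have "lift_simple_corner_at f i (chart_point i v)"
    if "sing_dir f l v" "i \<in> {1, 2, 3}" "comp3 i v \<noteq> 0" for v i
    using that lift_simple_corner_at_eigendirection[OF nonres] unfolding sd \<alpha>_def \<beta>_def \<gamma>_def by blast
  ultimately show ?thesis by blast
qed

end
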